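(* $\mathrm{HS}_{\mathsf{st}}\not\geq\mathrm{HS}_{\mathsf{lin}}$ and $\mathrm{HS}_{\mathsf{ct}}\not\geq\mathrm{HS}_{\mathsf{lin}}$: there is an $\mathrm{HS}$ formula $\psi$ such that no $\mathrm{HS}$ formula $\varphi$ satisfies, for every finite Kripke structure $K$, $K\models_{\mathsf{st}}\varphi$ iff $K\models_{\mathsf{lin}}\psi$; and there is an $\mathrm{HS}$ formula $\psi'$ such that no $\mathrm{HS}$ formula $\varphi$ satisfies, for every finite Kripke structure $K$, $K\models_{\mathsf{ct}}\varphi$ iff $K\models_{\mathsf{lin}}\psi'$.
   Context: A Kripke structure over a finite set $\mathcal{AP}$ is $K=(\mathcal{AP},S,\delta,\mu,s_0)$ with states $S$, left-total $\delta\subseteq S\times S$, labelling $\mu:S\to2^{\mathcal{AP}}$, initial state $s_0$; finite if $S$ is finite. Infinite paths are infinite state sequences following $\delta$; traces are their non-empty finite prefixes; initial means starting at $s_0$. For a finite word $w=w(0)\cdots w(n)$, $\mathrm{Pref}(w)=\{w[0,i]\mid0\le i\le n-1\}$, $\mathrm{Suff}(w)=\{w[i,n]\mid1\le i\le n\}$. The computation tree $C(K)$ has as states the initial traces of $K$, initial state $s_0$, labelling $\rho\mapsto\mu(\text{last state of }\rho)$, transitions $(\rho,\rho\cdot s)$. $\mathrm{HS}$ formulas: $\psi::=p\mid\neg\psi\mid\psi\wedge\psi\mid\langle X\rangle\psi$ for the Allen relations $A,L,B,E,D,O$ and inverses; all definable (non-strict semantics) from $\langle B\rangle,\langle E\rangle,\langle\bar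 B\rangle,\langle\bar E\rangle$. State-based semantics over traces: $\rho\models p$ iff $p\in\mu(s)$ for every state $s$ of $\rho$; $\langle B\rangle\psi$: some $\rho'\in\mathrm{Pref}(\rho)$ satisfies $\psi$; $\langle E\rangle\psi$: some $\rho'\in\mathrm{Suff}(\rho)$; $\langle\bar B\rangle\psi$: some trace $\rho'$ with $\rho\in\mathrm{Pref}(\rho')$; $\langle\bar E\rangle\psi$: some trace $\rho'$ with $\rho\in\mathrm{Suff}(\rho')$. $K\models_{\mathsf{st}}\psi$ iff every initial trace satisfies $\psi$; $K\models_{\mathsf{ct}}\psi$ iff $C(K)\models_{\mathsf{st}}\psi$. Trace-based: for an infinite path $\pi$, intervals $[i,j]$, $0\le i\le j$; $[i,j]\models p$ iff $p\in\mu(\pi(h))$ for all $i\le h\le j$; $[x,y]\models\langle B\rangle\psi$ iff $[x,z]\models\psi$ for some $x\le z<y$; $\langle E\rangle$: $[v,y]$ for some $x<v\le y$; $\langle\bar B\rangle$: $[x,z]$ for some $z>y$; $\langle\bar E\rangle$: $[v,y]$ for some $v<x$. $K\models_{\mathsf{lin}}\psi$ iff for every initial infinite path $\pi$ and $i\ge0$, $[0,i]\models\psi$ in $\pi$. *)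

theory Defs
  imports Main
begin

text \<open>Kripke structures over the finite set of proposition letters UNIV :: 'ap set
  ('ap of class finite). States of type 's; the state set S is explicit.\<close>

record ('s, 'ap) kripke =
  states :: "'s set"
  trans  :: "('s \<times> 's) set"
  label  :: "'s \<Rightarrow> 'ap set"
  init   :: 's

definition kripke :: "('s, 'ap) kripke \<Rightarrow> bool" where
  "kripke K \<longleftrightarrow> trans K \<subseteq> states K \<times> states K
     \<and> (\<forall>s\<in>states K. \<exists>t. (s, t) \<in> trans K)
     \<and> init K \<in> states K"

text \<open>HS formulas; all Allen modalities are definable (non-strict semantics) from
  B, E, Bbar, Ebar, so these are taken as primitives.\<close>

datatype 'ap hs =
    Prop 'ap
  | Neg "'ap hs"
  | Conj "'ap hs" "'ap hs"
  | DiaB "'ap hs"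
  | DiaE "'ap hs"
  | DiaBbar "'ap hs"
  | DiaEbar "'ap hs"

definition is_trace :: "('s, 'ap) kripke \<Rightarrow> 's list \<Rightarrow> bool" where
  "is_trace K \<rho> \<longleftrightarrow> \<rho> \<noteq> [] \<and> set \<rho> \<subseteq> states K
     \<and> (\<forall>i. Suc i < length \<rho> \<longrightarrow> (\<rho> ! i, \<rho> ! Suc i) \<in> trans K)"

definition initial_trace :: "('s, 'ap) kripke \<Rightarrow> 's list \<Rightarrow> bool" where
  "initial_trace K \<rho> \<longleftrightarrow> is_trace K \<rho> \<and> hd \<rho> = init K"

primrec st_holds :: "('s, 'ap) kripke \<Rightarrow> 's list \<Rightarrow> 'ap hs \<Rightarrow> bool" where
  "st_holds K \<rho> (Prop p) \<longleftrightarrow> (\<forall>s\<in>set \<rho>. p \<in> label K s)"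
| "st_holds K \<rho> (Neg \<psi>) \<longleftrightarrow> \<not> st_holds K \<rho> \<psi>"
| "st_holds K \<rho> (Conj \<psi> \<chi>) \<longleftrightarrow> st_holds K \<rho> \<psi> \<and> st_holds K \<rho> \<chi>"
| "st_holds K \<rho> (DiaB \<psi>) \<longleftrightarrow>
     (\<exists>i. 1 \<le> i \<and> i < length \<rho> \<and> st_holds K (take i \<rho>) \<psi>)"
| "st_holds K \<rho> (DiaE \<psi>) \<longleftrightarrow>
     (\<exists>i. 1 \<le> i \<and> i < length \<rho> \<and> st_holds K (drop i \<rho>) \<psi>)"
| "st_holds K \<rho> (DiaBbar \<psi>) \<longleftrightarrow>
     (\<exists>\<rho>'. is_trace K \<rho>' \<and> length \<rho> < length \<rho>' \<and> take (length \<rho>) \<rho>' = \<rho>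
        \<and> st_holds K \<rho>' \<psi>)"
| "st_holds K \<rho> (DiaEbar \<psi>) \<longleftrightarrow>
     (\<exists>\<rho>'. is_trace K \<rho>' \<and> length \<rho> < length \<rho>'
        \<and> drop (length \<rho>' - length \<rho>) \<rho>' = \<rho> \<and> st_holds K \<rho>' \<psi>)"

definition st_models :: "('s, 'ap) kripke \<Rightarrow> 'ap hs \<Rightarrow> bool" where
  "st_models K \<psi> \<longleftrightarrow> (\<forall>\<rho>. initial_trace K \<rho> \<longrightarrow> st_holds K \<rho> \<psi>)"

definition comp_tree :: "('s, 'ap) kripke \<Rightarrow> ('s list, 'ap) kripke" where
  "comp_tree K = \<lparr> states = {\<rho>. initial_trace K \<rho>},
     trans = {(\<rho>, \<rho> @ [s]) | \<rho> s. initial_trace K \<rho> \<and> (last \<rho>, s) \<in> trans K},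
     label = (\<lambda>\<rho>. label K (last \<rho>)),
     init = [init K] \<rparr>"

definition ct_models :: "('s, 'ap) kripke \<Rightarrow> 'ap hs \<Rightarrow> bool" where
  "ct_models K \<psi> \<longleftrightarrow> st_models (comp_tree K) \<psi>"

definition is_path :: "('s, 'ap) kripke \<Rightarrow> (nat \<Rightarrow> 's) \<Rightarrow> bool" where
  "is_path K \<pi> \<longleftrightarrow> (\<forall>i. \<pi> i \<in> states K \<and> (\<pi> i, \<pi> (Suc i)) \<in> trans K)"

primrec lin_holds :: "('s, 'ap) kripke \<Rightarrow> (nat \<Rightarrow> 's) \<Rightarrow> nat \<Rightarrow> nat \<Rightarrow> 'ap hs \<Rightarrow> bool" where
  "lin_holds K \<pi> x y (Prop p) \<longleftrightarrow> (\<forall>h. x \<le> h \<and> h \<le> y \<longrightarrow> p \<in> label K (\<pi> h))"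
| "lin_holds K \<pi> x y (Neg \<psi>) \<longleftrightarrow> \<not> lin_holds K \<pi> x y \<psi>"
| "lin_holds K \<pi> x y (Conj \<psi> \<chi>) \<longleftrightarrow> lin_holds K \<pi> x y \<psi> \<and> lin_holds K \<pi> x y \<chi>"
| "lin_holds K \<pi> x y (DiaB \<psi>) \<longleftrightarrow> (\<exists>z. x \<le> z \<and> z < y \<and> lin_holds K \<pi> x z \<psi>)"
| "lin_holds K \<pi> x y (DiaE \<psi>) \<longleftrightarrow> (\<exists>v. x < v \<and> v \<le> y \<and> lin_holds K \<pi> v y \<psi>)"
| "lin_holds K \<pi> x y (DiaBbar \<psi>) \<longleftrightarrow> (\<exists>z. y < z \<and> lin_holds K \<pi> x z \<psi>)"
| "lin_holds K \<pi> x y (DiaEbar \<psi>) \<longleftrightarrow> (\<exists>v. v < x \<and> lin_holds K \<pi> v y \<psi>)"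

definition lin_models :: "('s, 'ap) kripke \<Rightarrow> 'ap hs \<Rightarrow> bool" where
  "lin_models K \<psi> \<longleftrightarrow>
     (\<forall>\<pi>. is_path K \<pi> \<and> \<pi> 0 = init K \<longrightarrow> (\<forall>i. lin_holds K \<pi> 0 i \<psi>))"

end

theory Submission
  imports Defs
begin

text \<open>Consider the ladder \<open>0 \<rightarrow> 1 \<rightarrow> \<dots> \<rightarrow> n \<rightarrow> n + 1\<close> with loops at \<open>0\<close> and \<open>n + 1\<close>, in which
  only the top \<open>n + 1\<close> satisfies propositions. Started in \<open>1\<close>, every infinite path climbs to the top
  and stays there, so \<open>\<langle>Bbar\<rangle>\<langle>E\<rangle>p\<close> holds on every initial interval under the linear semantics;
  started in \<open>0\<close>, the path that loops at \<open>0\<close> forever refutes it.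

  A trace of the ladder is determined by its shape \<open>(k, R, m)\<close>: \<open>k\<close> states below the top, the last
  being \<open>n - R\<close>, then \<open>m\<close> top states; a path of the computation tree is a window into an initial
  trace. Formulas are evaluated on shapes and windows through a bisimulation with traces and paths.
  Agreement of all numbers up to the threshold \<open>2 ^ (d + 1)\<close> is a graded bisimulation: each modality
  can be answered at half the threshold. So formulas of depth \<open>d\<close> do not distinguish shapes that
  agree up to \<open>2 ^ (d + 1)\<close>, and once \<open>n = 2 ^ (d + 2)\<close> every initial trace from \<open>0\<close> has such a
  counterpart from \<open>1\<close> and vice versa: the two ladders satisfy the same formulas of depth \<open>d\<close> under
  the state-based and under the computation-tree semantics.\<close>

section \<open>Interval frames and graded bisimulations\<close>

datatype hs_dia = Dia_B | Dia_E | Dia_Bbar | Dia_Ebar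

record ('c, 'ap) hs_frame =
  hs_rel :: "hs_dia \<Rightarrow> 'c \<Rightarrow> 'c \<Rightarrow> bool"
  hs_val :: "'ap \<Rightarrow> 'c \<Rightarrow> bool"

primrec hs_sat :: "('c, 'ap) hs_frame \<Rightarrow> 'c \<Rightarrow> 'ap hs \<Rightarrow> bool" where
  "hs_sat F c (Prop p) \<longleftrightarrow> hs_val F p c"
| "hs_sat F c (Neg \<phi>) \<longleftrightarrow> \<not> hs_sat F c \<phi>"
| "hs_sat F c (Conj \<phi> \<chi>) \<longleftrightarrow> hs_sat F c \<phi> \<and> hs_sat F c \<chi>"
| "hs_sat F c (DiaB \<phi>) \<longleftrightarrow> (\<exists>c'. hs_rel F Dia_B c c' \<and> hs_sat F c' \<phi>)"
| "hs_sat F c (DiaE \<phi>) \<longleftrightarrow> (\<exists>c'. hs_rel F Dia_E c c' \<and> hs_sat F c' \<phi>)"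
| "hs_sat F c (DiaBbar \<phi>) \<longleftrightarrow> (\<exists>c'. hs_rel F Dia_Bbar c c' \<and> hs_sat F c' \<phi>)"
| "hs_sat F c (DiaEbar \<phi>) \<longleftrightarrow> (\<exists>c'. hs_rel F Dia_Ebar c c' \<and> hs_sat F c' \<phi>)"

primrec hs_depth :: "'ap hs \<Rightarrow> nat" where
  "hs_depth (Prop p) = 0"
| "hs_depth (Neg \<phi>) = hs_depth \<phi>"
| "hs_depth (Conj \<phi> \<chi>) = max (hs_depth \<phi>) (hs_depth \<chi>)"
| "hs_depth (DiaB \<phi>) = Suc (hs_depth \<phi>)"
| "hs_depth (DiaE \<phi>) = Suc (hs_depth \<phi>)"
| "hs_depth (DiaBbar \<phi>) = Suc (hs_depth \<phi>)"
| "hs_depth (DiaEbar \<phi>) = Suc (hs_depth \<phi>)"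

definition graded_bisim ::
    "('c, 'ap) hs_frame \<Rightarrow> ('d, 'ap) hs_frame \<Rightarrow> (nat \<Rightarrow> 'c \<Rightarrow> 'd \<Rightarrow> bool) \<Rightarrow> bool" where
  "graded_bisim F G Z \<longleftrightarrow>
     (\<forall>d c e p. Z d c e \<longrightarrow> hs_val F p c = hs_val G p e)
   \<and> (\<forall>d c e. Z (Suc d) c e \<longrightarrow> Z d c e)
   \<and> (\<forall>d r c e c'. Z (Suc d) c e \<longrightarrow> hs_rel F r c c' \<longrightarrow> (\<exists>e'. hs_rel G r e e' \<and> Z d c' e'))
   \<and> (\<forall>d r c e e'. Z (Suc d) c e \<longrightarrow> hs_rel G r e e' \<longrightarrow> (\<exists>c'. hs_rel F r c c' \<and> Z d c' e'))"

lemma graded_bisimD: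
  assumes "graded_bisim F G Z"
  shows graded_bisim_val: "Z d c e \<Longrightarrow> hs_val F p c \<longleftrightarrow> hs_val G p e"
    and graded_bisim_Suc: "Z (Suc d) c e \<Longrightarrow> Z d c e"
    and graded_bisim_forward:
      "Z (Suc d) c e \<Longrightarrow> hs_rel F r c c' \<Longrightarrow> \<exists>e'. hs_rel G r e e' \<and> Z d c' e'"
    and graded_bisim_backward:
      "Z (Suc d) c e \<Longrightarrow> hs_rel G r e e' \<Longrightarrow> \<exists>c'. hs_rel F r c c' \<and> Z d c' e'"
  using assms unfolding graded_bisim_def by blast+

lemma graded_bisim_dia_iff:
  assumes Z: "graded_bisim F G Z" and cZe: "Z (Suc d) c e"
    and PQ: "\<And>c' e'. Z d c' e' \<Longrightarrow> P c' \<longleftrightarrow> Q e'"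
  shows "(\<exists>c'. hs_rel F r c c' \<and> P c') \<longleftrightarrow> (\<exists>e'. hs_rel G r e e' \<and> Q e')"
proof
  assume "\<exists>c'. hs_rel F r c c' \<and> P c'"
  then obtain c' where "hs_rel F r c c'" "P c'" by blast
  with graded_bisim_forward[OF Z cZe] PQ show "\<exists>e'. hs_rel G r e e' \<and> Q e'" by blast
next
  assume "\<exists>e'. hs_rel G r e e' \<and> Q e'"
  then obtain e' where "hs_rel G r e e'" "Q e'" by blast
  with graded_bisim_backward[OF Z cZe] PQ show "\<exists>c'. hs_rel F r c c' \<and> P c'" by blast
qed

theorem graded_bisim_hs_sat:
  assumes Z: "graded_bisim F G Z"
  shows "hs_depth \<phi> \<le> d \<Longrightarrow> Z d c e \<Longrightarrow> hs_sat F c \<phi> \<longleftrightarrow> hs_sat G e \<phi>"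
proof (induction \<phi> arbitrary: d c e)
  case (Prop p)
  then show ?case using graded_bisim_val[OF Z] by simp
next
  case (Neg \<phi>)
  then show ?case by simp
next
  case (Conj \<phi> \<chi>)
  then have "hs_depth \<phi> \<le> d" "hs_depth \<chi> \<le> d" by simp_all
  with Conj show ?case by simp
next
  case (DiaB \<phi>)
  then obtain d' where "d = Suc d'" "hs_depth \<phi> \<le> d'" by (cases d) auto
  with DiaB show ?case by (simp add: graded_bisim_dia_iff[OF Z])
next
  case (DiaE \<phi>)
  then obtain d' where "d = Suc d'" "hs_depth \<phi> \<le> d'" by (cases d) auto
  with DiaE show ?case by (simp add: graded_bisim_dia_iff[OF Z])
next
  case (DiaBbar \<phi>)
  then obtain d' where "d = Suc d'" "hs_depth \<phi> \<le> d'" by (cases d) auto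
  with DiaBbar show ?case by (simp add: graded_bisim_dia_iff[OF Z])
next
  case (DiaEbar \<phi>)
  then obtain d' where "d = Suc d'" "hs_depth \<phi> \<le> d'" by (cases d) auto
  with DiaEbar show ?case by (simp add: graded_bisim_dia_iff[OF Z])
qed

lemma graded_bisim_symI:
  assumes sym: "\<And>d c e. Z d c e \<Longrightarrow> Z d e c"
    and val: "\<And>d c e p. Z d c e \<Longrightarrow> hs_val F p c \<longleftrightarrow> hs_val F p e"
    and antimono: "\<And>d c e. Z (Suc d) c e \<Longrightarrow> Z d c e"
    and forward: "\<And>d r c e c'. Z (Suc d) c e \<Longrightarrow> hs_rel F r c c' \<Longrightarrow> \<exists>e'. hs_rel F r e e' \<and> Z d c' e'"
  shows "graded_bisim F F Z"
proof -
  have "\<exists>c'. hs_rel F r c c' \<and> Z d c' e'" if "Z (Suc d) c e" "hs_rel F r e e'" for d r c e e'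
    using forward[OF sym[OF that(1)] that(2)] sym by blast
  with val antimono forward show ?thesis unfolding graded_bisim_def by blast
qed

lemma bisim_hs_sat:
  assumes val: "\<And>c e p. R c e \<Longrightarrow> hs_val F p c \<longleftrightarrow> hs_val G p e"
    and forward: "\<And>r c e c'. R c e \<Longrightarrow> hs_rel F r c c' \<Longrightarrow> \<exists>e'. hs_rel G r e e' \<and> R c' e'"
    and backward: "\<And>r c e e'. R c e \<Longrightarrow> hs_rel G r e e' \<Longrightarrow> \<exists>c'. hs_rel F r c c' \<and> R c' e'"
    and "R c e"
  shows "hs_sat F c \<phi> \<longleftrightarrow> hs_sat G e \<phi>"
proof (rule graded_bisim_hs_sat)
  show "graded_bisim F G (\<lambda>_. R)"
    unfolding graded_bisim_def using val forward backward by blast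
qed (use \<open>R c e\<close> in auto)

section \<open>Traces and the computation tree\<close>

fun trace_rel :: "('s, 'ap) kripke \<Rightarrow> hs_dia \<Rightarrow> 's list \<Rightarrow> 's list \<Rightarrow> bool" where
  "trace_rel K Dia_B \<rho> \<rho>' \<longleftrightarrow> (\<exists>i. 1 \<le> i \<and> i < length \<rho> \<and> \<rho>' = take i \<rho>)"
| "trace_rel K Dia_E \<rho> \<rho>' \<longleftrightarrow> (\<exists>i. 1 \<le> i \<and> i < length \<rho> \<and> \<rho>' = drop i \<rho>)"
| "trace_rel K Dia_Bbar \<rho> \<rho>' \<longleftrightarrow>
     is_trace K \<rho>' \<and> length \<rho> < length \<rho>' \<and> take (length \<rho>) \<rho>' = \<rho>"
| "trace_rel K Dia_Ebar \<rho> \<rho>' \<longleftrightarrow>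
     is_trace K \<rho>' \<and> length \<rho> < length \<rho>' \<and> drop (length \<rho>' - length \<rho>) \<rho>' = \<rho>"

definition trace_frame :: "('s, 'ap) kripke \<Rightarrow> ('s list, 'ap) hs_frame" where
  "trace_frame K = \<lparr>hs_rel = trace_rel K, hs_val = (\<lambda>p \<rho>. \<forall>s\<in>set \<rho>. p \<in> label K s)\<rparr>"

lemma st_holds_iff_hs_sat: "st_holds K \<rho> \<phi> \<longleftrightarrow> hs_sat (trace_frame K) \<rho> \<phi>"
  by (induction \<phi> arbitrary: \<rho>) (auto simp: trace_frame_def)

lemma is_trace_take:
  assumes "is_trace K \<rho>" "1 \<le> j"
  shows "is_trace K (take j \<rho>)"
  unfolding is_trace_def
proof (intro conjI allI impI)
  show "take j \<rho> \<noteq> []" using assms by (simp add: is_trace_def)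
  show "set (take j \<rho>) \<subseteq> states K" using assms(1) set_take_subset unfolding is_trace_def by fast
  fix i assume "Suc i < length (take j \<rho>)"
  then show "(take j \<rho> ! i, take j \<rho> ! Suc i) \<in> trans K" using assms(1) unfolding is_trace_def by simp
qed

lemma is_trace_snocD:
  assumes "is_trace K (\<rho> @ [s])" "\<rho> \<noteq> []"
  shows "is_trace K \<rho>" "(last \<rho>, s) \<in> trans K"
proof -
  show "is_trace K \<rho>"
    using is_trace_take[OF assms(1), of "length \<rho>"] assms(2) by (simp add: Suc_le_eq)
  have "Suc (length \<rho> - 1) < length (\<rho> @ [s])" using assms(2) by simp
  with assms(1) have "((\<rho> @ [s]) ! (length \<rho> - 1), (\<rho> @ [s]) ! Suc (length \<rho> - 1)) \<in> trans K"
    unfolding is_trace_def by blast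
  with assms(2) show "(last \<rho>, s) \<in> trans K" by (simp add: nth_append last_conv_nth)
qed

lemma initial_trace_take: "initial_trace K \<rho> \<Longrightarrow> 1 \<le> j \<Longrightarrow> initial_trace K (take j \<rho>)"
  unfolding initial_trace_def by (simp add: is_trace_take)

definition prefix_path :: "'s list \<Rightarrow> nat \<Rightarrow> 's list list" where
  "prefix_path \<rho> x = map (\<lambda>i. take (Suc i) \<rho>) [x..<length \<rho>]"

lemma length_prefix_path [simp]: "length (prefix_path \<rho> x) = length \<rho> - x"
  by (simp add: prefix_path_def)

lemma take_prefix_path:
  assumes "1 \<le> i" "i \<le> length \<rho> - x"
  shows "take i (prefix_path \<rho> x) = prefix_path (take (x + i) \<rho>) x"
proof -
  have "take i (prefix_path \<rho> x) = map (\<lambda>j. take (Suc j) \<rho>) [x..<x + i]"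
    using assms by (simp add: prefix_path_def take_map)
  also have "\<dots> = map (\<lambda>j. take (Suc j) (take (x + i) \<rho>)) [x..<x + i]"
    by (intro map_cong) (auto simp: min_def)
  also have "\<dots> = prefix_path (take (x + i) \<rho>) x"
    using assms by (simp add: prefix_path_def)
  finally show ?thesis .
qed

lemma drop_prefix_path: "drop i (prefix_path \<rho> x) = prefix_path \<rho> (x + i)"
  by (simp add: prefix_path_def drop_map)

lemma hd_prefix_path: "x < length \<rho> \<Longrightarrow> hd (prefix_path \<rho> x) = take (Suc x) \<rho>"
  by (simp add: prefix_path_def upt_conv_Cons)

lemma last_prefix_path: "x < length \<rho> \<Longrightarrow> last (prefix_path \<rho> x) = \<rho>"
  unfolding prefix_path_def by (subst last_map) auto

lemma prefix_path_inj:
  assumes "x < length \<rho>" "x' < length \<rho>'" "prefix_path \<rho> x = prefix_path \<rho>' x'"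
  shows "\<rho> = \<rho>'" "x = x'"
proof -
  have "take (Suc x) \<rho> = take (Suc x') \<rho>'"
    using arg_cong[OF assms(3), of hd] assms(1,2) by (simp add: hd_prefix_path)
  then have "length (take (Suc x) \<rho>) = length (take (Suc x') \<rho>')" by (rule arg_cong)
  with assms(1,2) show "x = x'" by simp
  show "\<rho> = \<rho>'"
    using arg_cong[OF assms(3), of last] assms(1,2) by (simp add: last_prefix_path)
qed

lemma is_trace_comp_tree_prefix_path:
  assumes \<rho>: "initial_trace K \<rho>" and x: "x < length \<rho>"
  shows "is_trace (comp_tree K) (prefix_path \<rho> x)"
  unfolding is_trace_def
proof (intro conjI allI impI)
  show "prefix_path \<rho> x \<noteq> []"
    using x by (metis length_prefix_path list.size(3) zero_less_diff less_irrefl)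
  show "set (prefix_path \<rho> x) \<subseteq> states (comp_tree K)"
    using initial_trace_take[OF \<rho>] by (auto simp: prefix_path_def comp_tree_def)
  fix i assume "Suc i < length (prefix_path \<rho> x)"
  then have i: "Suc (x + i) < length \<rho>" by simp
  have "prefix_path \<rho> x ! Suc i = take (Suc (x + i)) \<rho> @ [\<rho> ! Suc (x + i)]"
    using i by (simp add: prefix_path_def take_Suc_conv_app_nth)
  moreover have "(last (take (Suc (x + i)) \<rho>), \<rho> ! Suc (x + i)) \<in> trans K"
    using \<rho> i unfolding initial_trace_def is_trace_def by (simp add: take_Suc_conv_app_nth)
  moreover have "initial_trace K (take (Suc (x + i)) \<rho>)"
    using initial_trace_take[OF \<rho>] by simp
  ultimately show "(prefix_path \<rho> x ! i, prefix_path \<rho> x ! Suc i) \<in> trans (comp_tree K)"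
    using i by (auto simp: prefix_path_def comp_tree_def)
qed

lemma nth_snoc_chain:
  assumes "\<forall>i. Suc i < length L \<longrightarrow> (\<exists>s. L ! Suc i = L ! i @ [s])" "j + d < length L"
  shows "\<exists>ys. L ! (j + d) = L ! j @ ys \<and> length ys = d"
  using assms(2)
proof (induction d)
  case (Suc d)
  then obtain ys where "L ! (j + d) = L ! j @ ys" "length ys = d" by auto
  moreover obtain s where "L ! Suc (j + d) = L ! (j + d) @ [s]" using assms(1) Suc.prems by auto
  ultimately show ?case by (intro exI[of _ "ys @ [s]"]) simp
qed simp

lemma comp_tree_trace_obtain:
  assumes L: "is_trace (comp_tree K) L"
  obtains \<rho> x where "initial_trace K \<rho>" "x < length \<rho>" "L = prefix_path \<rho> x"
proof -
  have ne: "L \<noteq> []" using L by (simp add: is_trace_def)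
  have init: "initial_trace K (L ! i)" if "i < length L" for i
    using L nth_mem[OF that] unfolding is_trace_def by (auto simp: comp_tree_def)
  have step: "\<forall>i. Suc i < length L \<longrightarrow> (\<exists>s. L ! Suc i = L ! i @ [s])"
    using L unfolding is_trace_def comp_tree_def by auto
  define \<rho> where "\<rho> = last L"
  define h where "h = length (L ! 0)"
  have h: "h \<ge> 1"
    using init[of 0] ne unfolding h_def initial_trace_def is_trace_def by (cases "L ! 0") auto
  have len: "length (L ! j) = h + j" if "j < length L" for j
    using nth_snoc_chain[OF step, of 0 j] that unfolding h_def by auto
  have L_nth: "L ! j = take (h + j) \<rho>" if j: "j < length L" for j
  proof -
    have "j + (length L - 1 - j) < length L" using j by simp
    then obtain ys where "L ! (j + (length L - 1 - j)) = L ! j @ ys"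
      using nth_snoc_chain[OF step] by blast
    with j ne have "\<rho> = L ! j @ ys" unfolding \<rho>_def by (simp add: last_conv_nth)
    with len[OF j] show ?thesis by simp
  qed
  have len_\<rho>: "length \<rho> = h + (length L - 1)"
    unfolding \<rho>_def using len[of "length L - 1"] ne by (simp add: last_conv_nth)
  have "L = prefix_path \<rho> (h - 1)"
  proof (rule nth_equalityI)
    show "length L = length (prefix_path \<rho> (h - 1))" using len_\<rho> h ne by simp
  next
    fix i assume "i < length L"
    then show "L ! i = prefix_path \<rho> (h - 1) ! i"
      using L_nth[of i] len_\<rho> h by (simp add: prefix_path_def)
  qed
  moreover have "initial_trace K \<rho>"
    unfolding \<rho>_def using init[of "length L - 1"] ne by (simp add: last_conv_nth)
  moreover have "h - 1 < length \<rho>" using len_\<rho> h by simp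
  ultimately show thesis using that by blast
qed

lemma hs_val_comp_tree_prefix_path:
  assumes "x < length \<rho>"
  shows "hs_val (trace_frame (comp_tree K)) p (prefix_path \<rho> x)
    \<longleftrightarrow> (\<forall>i. x \<le> i \<and> i < length \<rho> \<longrightarrow> p \<in> label K (\<rho> ! i))"
proof -
  have "last (take (Suc i) \<rho>) = \<rho> ! i" if "i < length \<rho>" for i
    using that by (simp add: take_Suc_conv_app_nth)
  then show ?thesis by (auto simp: trace_frame_def prefix_path_def comp_tree_def)
qed

lemma ct_models_iff_prefix_paths:
  "ct_models K \<phi> \<longleftrightarrow> (\<forall>\<rho>. initial_trace K \<rho> \<longrightarrow> st_holds (comp_tree K) (prefix_path \<rho> 0) \<phi>)"
proof -
  have "initial_trace (comp_tree K) L \<longleftrightarrow> (\<exists>\<rho>. initial_trace K \<rho> \<and> L = prefix_path \<rho> 0)" for L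
  proof
    assume L: "initial_trace (comp_tree K) L"
    then have "is_trace (comp_tree K) L" unfolding initial_trace_def by simp
    then obtain \<rho> x where \<rho>: "initial_trace K \<rho>" "x < length \<rho>" "L = prefix_path \<rho> x"
      by (rule comp_tree_trace_obtain)
    then have "hd L = take (Suc x) \<rho>" by (simp add: hd_prefix_path)
    moreover have "hd L = [init K]" using L unfolding initial_trace_def by (simp add: comp_tree_def)
    ultimately have "length (take (Suc x) \<rho>) = length [init K]" by simp
    with \<rho>(2) have "x = 0" by (simp add: min_def split: if_splits)
    with \<rho> show "\<exists>\<rho>. initial_trace K \<rho> \<and> L = prefix_path \<rho> 0" by blast
  next
    assume "\<exists>\<rho>. initial_trace K \<rho> \<and> L = prefix_path \<rho> 0"
    then obtain \<rho> where \<rho>: "initial_trace K \<rho>" and L: "L = prefix_path \<rho> 0" by blast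
    then have ne: "\<rho> \<noteq> []" unfolding initial_trace_def is_trace_def by simp
    have "hd L = [hd \<rho>]" using ne unfolding L by (cases \<rho>) (simp_all add: hd_prefix_path)
    then show "initial_trace (comp_tree K) L"
      using is_trace_comp_tree_prefix_path[OF \<rho>] ne \<rho> L
      unfolding initial_trace_def by (simp add: comp_tree_def)
  qed
  then show ?thesis unfolding ct_models_def st_models_def by auto
qed

lemma min_eq_mono: "t \<le> T \<Longrightarrow> min T a = min T b \<Longrightarrow> min t a = min t (b::nat)"
  unfolding min_def by (auto split: if_splits)

lemma min_eq_add:
  "min t a = min t a' \<Longrightarrow> min t b = min t b' \<Longrightarrow> min t (a + b) = min t (a' + (b'::nat))"
  unfolding min_def by (auto split: if_splits)

lemma min_eq_zero_iff: "1 \<le> t \<Longrightarrow> min t a = min t b \<Longrightarrow> a = 0 \<longleftrightarrow> b = (0::nat)"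
  unfolding min_def by (auto split: if_splits)

lemma min_eq_pos_iff: "1 \<le> t \<Longrightarrow> min t a = min t b \<Longrightarrow> 1 \<le> a \<longleftrightarrow> 1 \<le> (b::nat)"
  unfolding min_def by (auto split: if_splits)

lemma min_eq_split:
  assumes "2 * t \<le> T" "min T X = min T (X'::nat)" "a \<le> X"
  obtains a' where "a' \<le> X'" "min t a' = min t a" "min t (X' - a') = min t (X - a)"
proof (cases "X < T")
  case True
  then have "X' = X" using assms by (auto simp: min_def split: if_splits)
  then show ?thesis using assms that by blast
next
  case False
  then have X': "T \<le> X'" using assms by (auto simp: min_def split: if_splits)
  consider "a < t" | "t \<le> a" "X - a < t" | "t \<le> a" "t \<le> X - a" by linarith
  then show ?thesis
  proof cases
    case 1
    with X' False assms show ?thesis by (intro that[of a]) auto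
  next
    case 2
    with X' False assms show ?thesis by (intro that[of "X' - (X - a)"]) auto
  next
    case 3
    with X' False assms show ?thesis by (intro that[of t]) auto
  qed
qed

section \<open>Ladders and shapes\<close>

definition ladder :: "nat \<Rightarrow> nat \<Rightarrow> (nat, 'ap) kripke" where
  "ladder n s0 = \<lparr>states = {..Suc n}, trans = {(i, Suc i) | i. i \<le> n} \<union> {(0, 0), (Suc n, Suc n)},
     label = (\<lambda>s. if s = Suc n then UNIV else {}), init = s0\<rparr>"

lemma ladder_simps [simp]:
  "states (ladder n s0) = {..Suc n}"
  "p \<in> label (ladder n s0) s \<longleftrightarrow> s = Suc n"
  "init (ladder n s0) = s0"
  "(s, s') \<in> trans (ladder n s0) \<longleftrightarrow>
     (s' = Suc s \<and> s \<le> n) \<or> (s = 0 \<and> s' = 0) \<or> (s = Suc n \<and> s' = Suc n)"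
  by (auto simp: ladder_def)

lemma kripke_ladder: "s0 \<le> Suc n \<Longrightarrow> kripke (ladder n s0)"
proof -
  have "(s, if s \<le> n then Suc s else Suc n) \<in> trans (ladder n s0)" if "s \<le> Suc n" for s
    using that by auto
  moreover assume "s0 \<le> Suc n"
  ultimately show ?thesis unfolding kripke_def by (auto simp: ladder_def)
qed

type_synonym shape = "nat \<times> nat \<times> nat"

text \<open>The trace of shape \<open>(k, R, m)\<close> runs through \<open>k\<close> states of \<open>{0..n}\<close>, the last one
  being \<open>n - R\<close>, and then stays \<open>m\<close> steps in the top state \<open>n + 1\<close>; truncated subtraction
  makes its first entries \<open>0\<close> when it lingers in the loop at \<open>0\<close>.\<close>

fun shape_trace :: "nat \<Rightarrow> shape \<Rightarrow> nat list" where
  "shape_trace n (k, R, m) = map (\<lambda>t. (n - R + 1 + t) - k) [0..<k] @ replicate m (Suc n)"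

fun wf_shape :: "nat \<Rightarrow> shape \<Rightarrow> bool" where
  "wf_shape n (k, R, m) \<longleftrightarrow> 1 \<le> k + m \<and> R \<le> n \<and> (0 < m \<longrightarrow> R = 0) \<and> (k = 0 \<longrightarrow> R = 0)"

fun shape_len :: "shape \<Rightarrow> nat" where
  "shape_len (k, R, m) = k + m"

fun shape_take :: "nat \<Rightarrow> shape \<Rightarrow> nat \<Rightarrow> shape" where
  "shape_take n (k, R, m) i = (if i \<le> k then (i, min n (R + (k - i)), 0) else (k, R, i - k))"

fun shape_drop :: "shape \<Rightarrow> nat \<Rightarrow> shape" where
  "shape_drop (k, R, m) i = (if i < k then (k - i, R, m) else (0, 0, m - (i - k)))"

lemma length_shape_trace [simp]: "length (shape_trace n \<sigma>) = shape_len \<sigma>"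
  by (cases \<sigma>) auto

lemma nth_shape_trace:
  "i < k + m \<Longrightarrow> shape_trace n (k, R, m) ! i = (if i < k then (n - R + 1 + i) - k else Suc n)"
  by (auto simp: nth_append)

lemma hd_shape_trace:
  assumes "wf_shape n (k, R, m)"
  shows "hd (shape_trace n (k, R, m)) = (if 0 < k then (n - R + 1) - k else Suc n)"
proof -
  have "shape_trace n (k, R, m) \<noteq> []" using assms by auto
  then have "hd (shape_trace n (k, R, m)) = shape_trace n (k, R, m) ! 0" by (simp add: hd_conv_nth)
  with assms show ?thesis using nth_shape_trace[of 0 k m n R] by auto
qed

lemma shape_len_pos: "wf_shape n \<sigma> \<Longrightarrow> 1 \<le> shape_len \<sigma>"
  by (cases \<sigma>) auto

lemma wf_shape_take: "wf_shape n \<sigma> \<Longrightarrow> 1 \<le> i \<Longrightarrow> i \<le> shape_len \<sigma> \<Longrightarrow> wf_shape n (shape_take n \<sigma> i)"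
  by (cases \<sigma>) auto

lemma wf_shape_drop: "wf_shape n \<sigma> \<Longrightarrow> i < shape_len \<sigma> \<Longrightarrow> wf_shape n (shape_drop \<sigma> i)"
  by (cases \<sigma>) auto

lemma take_shape_trace:
  assumes "1 \<le> i" "i \<le> shape_len \<sigma>"
  shows "take i (shape_trace n \<sigma>) = shape_trace n (shape_take n \<sigma> i)"
proof -
  obtain k R m where \<sigma>: "\<sigma> = (k, R, m)" by (cases \<sigma>)
  show ?thesis
  proof (cases "i \<le> k")
    case True
    have "take i (shape_trace n \<sigma>) = map (\<lambda>t. (n - R + 1 + t) - k) [0..<i]"
      using \<sigma> True by (simp add: take_map)
    also have "\<dots> = map (\<lambda>t. (n - min n (R + (k - i)) + 1 + t) - i) [0..<i]"
      using True by (intro map_cong) auto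
    finally show ?thesis using \<sigma> True by simp
  qed (use \<sigma> assms in \<open>simp add: take_map\<close>)
qed

lemma drop_shape_trace:
  assumes "i < shape_len \<sigma>"
  shows "drop i (shape_trace n \<sigma>) = shape_trace n (shape_drop \<sigma> i)"
proof -
  obtain k R m where \<sigma>: "\<sigma> = (k, R, m)" by (cases \<sigma>)
  show ?thesis
  proof (cases "i < k")
    case True
    have "[i..<k] = map (\<lambda>t. t + i) [0..<k - i]" using map_add_upt[of i "k - i"] True by simp
    then have "map (\<lambda>t. (n - R + 1 + t) - k) [i..<k] = map (\<lambda>t. (n - R + 1 + t) - (k - i)) [0..<k - i]"
      using True by (simp add: add.assoc)
    then show ?thesis using \<sigma> True by (simp add: drop_map)
  qed (use \<sigma> assms in simp)
qed

lemma shape_trace_inj: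
  assumes "wf_shape n \<sigma>" "wf_shape n \<sigma>'" "shape_trace n \<sigma> = shape_trace n \<sigma>'"
  shows "\<sigma> = \<sigma>'"
proof -
  obtain k R m where \<sigma>: "\<sigma> = (k, R, m)" by (cases \<sigma>)
  obtain k' R' m' where \<sigma>': "\<sigma>' = (k', R', m')" by (cases \<sigma>')
  have top: "filter (\<lambda>s. s = Suc n) (shape_trace n (k, R, m)) = replicate m (Suc n)" for k R m
    by (auto simp: filter_empty_conv)
  have "m = m'" using top[of k R m] top[of k' R' m'] assms(3) \<sigma> \<sigma>' by (metis length_replicate)
  moreover have "k = k'" using arg_cong[OF assms(3), of length] \<sigma> \<sigma>' calculation by simp
  moreover have "R = R'"
  proof (cases "k = 0")
    case False
    then have "shape_trace n \<sigma> ! (k - 1) = n - R" "shape_trace n \<sigma>' ! (k - 1) = n - R'"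
      using \<sigma> \<sigma>' \<open>k = k'\<close> nth_shape_trace[of "k - 1" k m n R] nth_shape_trace[of "k - 1" k m' n R'] by auto
    then show ?thesis using assms \<sigma> \<sigma>' by auto
  qed (use assms \<sigma> \<sigma>' calculation in simp)
  ultimately show ?thesis using \<sigma> \<sigma>' by simp
qed

lemma is_trace_shape_trace: "wf_shape n \<sigma> \<Longrightarrow> is_trace (ladder n s0) (shape_trace n \<sigma>)"
proof -
  assume wf: "wf_shape n \<sigma>"
  obtain k R m where \<sigma>: "\<sigma> = (k, R, m)" by (cases \<sigma>)
  show ?thesis unfolding is_trace_def
  proof (intro conjI allI impI)
    show "shape_trace n \<sigma> \<noteq> []" using wf \<sigma> by auto
    show "set (shape_trace n \<sigma>) \<subseteq> states (ladder n s0)" using \<sigma> by auto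
    fix i assume "Suc i < length (shape_trace n \<sigma>)"
    then have i: "Suc i < k + m" using \<sigma> by simp
    show "(shape_trace n \<sigma> ! i, shape_trace n \<sigma> ! Suc i) \<in> trans (ladder n s0)"
      unfolding \<sigma> ladder_simps nth_shape_trace[OF i] nth_shape_trace[OF Suc_lessD[OF i]]
      using wf \<sigma> i by auto
  qed
qed

lemma shape_trace_snoc:
  assumes wf: "wf_shape n (k, R, m)" and step: "(last (shape_trace n (k, R, m)), s) \<in> trans (ladder n s0)"
  obtains \<sigma> where "wf_shape n \<sigma>" "shape_trace n \<sigma> = shape_trace n (k, R, m) @ [s]"
proof (cases "m > 0")
  case True
  then have "last (shape_trace n (k, R, m)) = Suc n" by (cases m) auto
  with step have "s = Suc n" by auto
  with wf True show ?thesis by (intro that[of "(k, R, Suc m)"]) (auto simp: replicate_append_same)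
next
  case False
  with wf have m: "m = 0" and k: "k \<ge> 1" by auto
  then have last: "last (shape_trace n (k, R, m)) = n - R" by (cases k) auto
  show ?thesis
  proof (cases "s = Suc n")
    case True
    with step last wf m k show ?thesis by (intro that[of "(k, 0, 1)"]) auto
  next
    case False
    with step last have s: "s = n - R + 1 \<and> n - R \<le> n \<or> (n - R = 0 \<and> s = 0)" by auto
    with wf False step last have s_le: "s \<le> n" by auto
    have "map (\<lambda>t. (n - (n - s) + 1 + t) - Suc k) [0..<k] = map (\<lambda>t. (n - R + 1 + t) - k) [0..<k]"
      using s s_le by (intro map_cong) auto
    then have "shape_trace n (Suc k, n - s, 0) = shape_trace n (k, R, m) @ [s]"
      using m s_le by simp
    with s_le show ?thesis by (intro that[of "(Suc k, n - s, 0)"]) simp_all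
  qed
qed

lemma trace_ladder_obtain:
  assumes "is_trace (ladder n s0) \<rho>"
  obtains \<sigma> where "wf_shape n \<sigma>" "\<rho> = shape_trace n \<sigma>"
proof -
  have "\<exists>\<sigma>. wf_shape n \<sigma> \<and> \<rho> = shape_trace n \<sigma>"
    using assms
  proof (induction \<rho> rule: rev_induct)
    case Nil
    then show ?case by (simp add: is_trace_def)
  next
    case (snoc s \<rho>)
    show ?case
    proof (cases "\<rho> = []")
      case True
      with snoc.prems have "s \<le> Suc n" by (auto simp: is_trace_def)
      then have "wf_shape n (if s = Suc n then (0, 0, 1) else (1, n - s, 0))
          \<and> [s] = shape_trace n (if s = Suc n then (0, 0, 1) else (1, n - s, 0))"
        by auto
      then show ?thesis using True
        by (intro exI[of _ "if s = Suc n then (0, 0, 1) else (1, n - s, 0)"]) simp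
    next
      case False
      note \<rho>_step = is_trace_snocD[OF snoc.prems False]
      then obtain k R m where wf: "wf_shape n (k, R, m)" and \<rho>: "\<rho> = shape_trace n (k, R, m)"
        using snoc.IH by (auto simp del: shape_trace.simps wf_shape.simps)
      obtain \<sigma> where "wf_shape n \<sigma>" "shape_trace n \<sigma> = shape_trace n (k, R, m) @ [s]"
        using shape_trace_snoc[OF wf \<rho>_step(2)[unfolded \<rho>]] .
      with \<rho> show ?thesis by (metis (no_types))
    qed
  qed
  with that show thesis by blast
qed

lemma all_top_shape_trace:
  assumes "wf_shape n \<sigma>"
  shows "(\<forall>s\<in>set (shape_trace n \<sigma>). s = Suc n) \<longleftrightarrow> fst \<sigma> = 0"
proof -
  obtain k R m where \<sigma>: "\<sigma> = (k, R, m)" by (cases \<sigma>)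
  show ?thesis
  proof (cases "k = 0")
    case False
    then have "shape_trace n \<sigma> ! 0 \<in> set (shape_trace n \<sigma>)" using \<sigma> by (intro nth_mem) simp
    moreover have "shape_trace n \<sigma> ! 0 \<le> n" using \<sigma> False nth_shape_trace[of 0 k m n R] by simp
    ultimately show ?thesis using \<sigma> False by (metis Suc_n_not_le_n fst_conv)
  qed (use \<sigma> in simp)
qed

fun shape_rel :: "nat \<Rightarrow> hs_dia \<Rightarrow> shape \<Rightarrow> shape \<Rightarrow> bool" where
  "shape_rel n Dia_B \<sigma> \<sigma>' \<longleftrightarrow> (\<exists>i. 1 \<le> i \<and> i < shape_len \<sigma> \<and> \<sigma>' = shape_take n \<sigma> i)"
| "shape_rel n Dia_E \<sigma> \<sigma>' \<longleftrightarrow> (\<exists>i. 1 \<le> i \<and> i < shape_len \<sigma> \<and> \<sigma>' = shape_drop \<sigma> i)"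
| "shape_rel n Dia_Bbar \<sigma> \<sigma>' \<longleftrightarrow>
     wf_shape n \<sigma>' \<and> shape_len \<sigma> < shape_len \<sigma>' \<and> shape_take n \<sigma>' (shape_len \<sigma>) = \<sigma>"
| "shape_rel n Dia_Ebar \<sigma> \<sigma>' \<longleftrightarrow>
     wf_shape n \<sigma>' \<and> shape_len \<sigma> < shape_len \<sigma>' \<and> shape_drop \<sigma>' (shape_len \<sigma>' - shape_len \<sigma>) = \<sigma>"

definition shape_frame :: "nat \<Rightarrow> (shape, 'ap) hs_frame" where
  "shape_frame n = \<lparr>hs_rel = shape_rel n, hs_val = (\<lambda>_ \<sigma>. fst \<sigma> = 0)\<rparr>"

lemma shape_rel_forward:
  assumes \<sigma>: "wf_shape n \<sigma>" and r: "shape_rel n r \<sigma> \<sigma>'"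
  shows "wf_shape n \<sigma>' \<and> trace_rel (ladder n s0 :: (nat, 'ap) kripke) r (shape_trace n \<sigma>) (shape_trace n \<sigma>')"
proof (cases r)
  case Dia_B
  with r obtain i where "1 \<le> i" "i < shape_len \<sigma>" "\<sigma>' = shape_take n \<sigma> i" by auto
  with \<sigma> Dia_B show ?thesis by (auto simp: wf_shape_take take_shape_trace)
next
  case Dia_E
  with r obtain i where "1 \<le> i" "i < shape_len \<sigma>" "\<sigma>' = shape_drop \<sigma> i" by auto
  with \<sigma> Dia_E show ?thesis by (auto simp: wf_shape_drop drop_shape_trace)
next
  case Dia_Bbar
  with r have "wf_shape n \<sigma>'" "shape_len \<sigma> < shape_len \<sigma>'" "shape_take n \<sigma>' (shape_len \<sigma>) = \<sigma>" by auto
  moreover have "take (shape_len \<sigma>) (shape_trace n \<sigma>') = shape_trace n \<sigma>"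
    using take_shape_trace[of "shape_len \<sigma>" \<sigma>' n] calculation shape_len_pos[OF \<sigma>] by simp
  ultimately show ?thesis using Dia_Bbar by (auto simp: is_trace_shape_trace)
next
  case Dia_Ebar
  with r have "wf_shape n \<sigma>'" "shape_len \<sigma> < shape_len \<sigma>'"
    "shape_drop \<sigma>' (shape_len \<sigma>' - shape_len \<sigma>) = \<sigma>" by auto
  moreover have "shape_len \<sigma>' - shape_len \<sigma> < shape_len \<sigma>'"
    using calculation(2) shape_len_pos[OF \<sigma>] by simp
  ultimately show ?thesis using Dia_Ebar by (auto simp: is_trace_shape_trace drop_shape_trace)
qed

lemma shape_rel_backward:
  assumes \<sigma>: "wf_shape n \<sigma>" and r: "trace_rel (ladder n s0 :: (nat, 'ap) kripke) r (shape_trace n \<sigma>) \<rho>'"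
  obtains \<sigma>' where "wf_shape n \<sigma>'" "shape_rel n r \<sigma> \<sigma>'" "\<rho>' = shape_trace n \<sigma>'"
proof (cases r)
  case Dia_B
  with r obtain i where "1 \<le> i" "i < shape_len \<sigma>" "\<rho>' = take i (shape_trace n \<sigma>)" by auto
  with \<sigma> Dia_B show thesis
    by (intro that[of "shape_take n \<sigma> i"]) (auto simp: wf_shape_take take_shape_trace)
next
  case Dia_E
  with r obtain i where "1 \<le> i" "i < shape_len \<sigma>" "\<rho>' = drop i (shape_trace n \<sigma>)" by auto
  with \<sigma> Dia_E show thesis
    by (intro that[of "shape_drop \<sigma> i"]) (auto simp: wf_shape_drop drop_shape_trace)
next
  case Dia_Bbar
  with r have tr: "is_trace (ladder n s0 :: (nat, 'ap) kripke) \<rho>'"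
    and len: "shape_len \<sigma> < length \<rho>'" and pre: "take (shape_len \<sigma>) \<rho>' = shape_trace n \<sigma>" by auto
  from tr obtain \<sigma>' where \<sigma>': "wf_shape n \<sigma>'" "\<rho>' = shape_trace n \<sigma>'" by (rule trace_ladder_obtain)
  have "shape_trace n (shape_take n \<sigma>' (shape_len \<sigma>)) = shape_trace n \<sigma>"
    using pre len \<sigma>' take_shape_trace[of "shape_len \<sigma>" \<sigma>' n] shape_len_pos[OF \<sigma>] by simp
  moreover have "wf_shape n (shape_take n \<sigma>' (shape_len \<sigma>))"
    using wf_shape_take[OF \<sigma>'(1)] shape_len_pos[OF \<sigma>] len \<sigma>' by simp
  ultimately have "shape_take n \<sigma>' (shape_len \<sigma>) = \<sigma>" using shape_trace_inj \<sigma> by blast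
  with \<sigma>' len Dia_Bbar show thesis by (intro that[of \<sigma>']) simp_all
next
  case Dia_Ebar
  with r have tr: "is_trace (ladder n s0 :: (nat, 'ap) kripke) \<rho>'" and len: "shape_len \<sigma> < length \<rho>'"
    and suf: "drop (length \<rho>' - shape_len \<sigma>) \<rho>' = shape_trace n \<sigma>" by auto
  from tr obtain \<sigma>' where \<sigma>': "wf_shape n \<sigma>'" "\<rho>' = shape_trace n \<sigma>'" by (rule trace_ladder_obtain)
  have lt: "shape_len \<sigma>' - shape_len \<sigma> < shape_len \<sigma>'" using len \<sigma>' shape_len_pos[OF \<sigma>] by simp
  have "shape_trace n (shape_drop \<sigma>' (shape_len \<sigma>' - shape_len \<sigma>)) = shape_trace n \<sigma>"
    using suf \<sigma>' drop_shape_trace[OF lt, of n] by simp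
  then have "shape_drop \<sigma>' (shape_len \<sigma>' - shape_len \<sigma>) = \<sigma>"
    using shape_trace_inj wf_shape_drop[OF \<sigma>'(1) lt] \<sigma> by simp
  with \<sigma>' len Dia_Ebar show thesis by (intro that[of \<sigma>']) simp_all
qed

lemma st_holds_shape_trace:
  fixes \<phi> :: "'ap hs"
  assumes "wf_shape n \<sigma>"
  shows "st_holds (ladder n s0) (shape_trace n \<sigma>) \<phi> \<longleftrightarrow> hs_sat (shape_frame n) \<sigma> \<phi>"
  unfolding st_holds_iff_hs_sat
proof (rule bisim_hs_sat[where R = "\<lambda>\<sigma> \<rho>. wf_shape n \<sigma> \<and> \<rho> = shape_trace n \<sigma>", symmetric])
  fix \<sigma> \<rho> p
  assume "wf_shape n \<sigma> \<and> \<rho> = shape_trace n \<sigma>"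
  then show "hs_val (shape_frame n) p \<sigma> \<longleftrightarrow> hs_val (trace_frame (ladder n s0 :: (nat, 'ap) kripke)) p \<rho>"
    using all_top_shape_trace[of n \<sigma>] by (auto simp: shape_frame_def trace_frame_def)
next
  fix r \<sigma> \<rho> \<sigma>'
  assume "wf_shape n \<sigma> \<and> \<rho> = shape_trace n \<sigma>" "hs_rel (shape_frame n) r \<sigma> \<sigma>'"
  then show "\<exists>\<rho>'. hs_rel (trace_frame (ladder n s0 :: (nat, 'ap) kripke)) r \<rho> \<rho>' \<and> wf_shape n \<sigma>' \<and> \<rho>' = shape_trace n \<sigma>'"
    using shape_rel_forward[of n \<sigma> r \<sigma>' s0] by (auto simp: shape_frame_def trace_frame_def)
next
  fix r \<sigma> \<rho> \<rho>'
  assume R: "wf_shape n \<sigma> \<and> \<rho> = shape_trace n \<sigma>" and rel: "hs_rel (trace_frame (ladder n s0 :: (nat, 'ap) kripke)) r \<rho> \<rho>'"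
  from R rel have "trace_rel (ladder n s0 :: (nat, 'ap) kripke) r (shape_trace n \<sigma>) \<rho>'" by (simp add: trace_frame_def)
  with R obtain \<sigma>' where "wf_shape n \<sigma>'" "shape_rel n r \<sigma> \<sigma>'" "\<rho>' = shape_trace n \<sigma>'"
    using shape_rel_backward by blast
  then show "\<exists>\<sigma>'. hs_rel (shape_frame n) r \<sigma> \<sigma>' \<and> wf_shape n \<sigma>' \<and> \<rho>' = shape_trace n \<sigma>'"
    by (intro exI[of _ \<sigma>']) (simp add: shape_frame_def)
qed (use assms in simp)

lemma initial_trace_ladder_iff:
  "initial_trace (ladder n s0 :: (nat, 'ap) kripke) \<rho> \<longleftrightarrow>
     (\<exists>\<sigma>. wf_shape n \<sigma> \<and> hd (shape_trace n \<sigma>) = s0 \<and> \<rho> = shape_trace n \<sigma>)"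
proof
  assume \<rho>: "initial_trace (ladder n s0 :: (nat, 'ap) kripke) \<rho>"
  then obtain \<sigma> where "wf_shape n \<sigma>" "\<rho> = shape_trace n \<sigma>"
    unfolding initial_trace_def by (blast elim: trace_ladder_obtain)
  with \<rho> show "\<exists>\<sigma>. wf_shape n \<sigma> \<and> hd (shape_trace n \<sigma>) = s0 \<and> \<rho> = shape_trace n \<sigma>"
    unfolding initial_trace_def by (intro exI[of _ \<sigma>]) simp
next
  assume "\<exists>\<sigma>. wf_shape n \<sigma> \<and> hd (shape_trace n \<sigma>) = s0 \<and> \<rho> = shape_trace n \<sigma>"
  then obtain \<sigma> where "wf_shape n \<sigma>" "hd (shape_trace n \<sigma>) = s0" "\<rho> = shape_trace n \<sigma>" by blast
  then show "initial_trace (ladder n s0 :: (nat, 'ap) kripke) \<rho>"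
    by (simp add: initial_trace_def is_trace_shape_trace)
qed

lemma st_models_ladder_iff:
  "st_models (ladder n s0) \<phi> \<longleftrightarrow>
     (\<forall>\<sigma>. wf_shape n \<sigma> \<and> hd (shape_trace n \<sigma>) = s0 \<longrightarrow> hs_sat (shape_frame n) \<sigma> \<phi>)"
  unfolding st_models_def initial_trace_ladder_iff using st_holds_shape_trace by blast

fun shape_eqv :: "nat \<Rightarrow> shape \<Rightarrow> shape \<Rightarrow> bool" where
  "shape_eqv T (k, R, m) (k', R', m') \<longleftrightarrow> min T k = min T k' \<and> min T R = min T R' \<and> min T m = min T m'"

lemma shape_eqv_sym: "shape_eqv T \<sigma> \<sigma>' \<Longrightarrow> shape_eqv T \<sigma>' \<sigma>"
  by (cases \<sigma>; cases \<sigma>') auto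

lemma shape_eqv_mono: "t \<le> T \<Longrightarrow> shape_eqv T \<sigma> \<sigma>' \<Longrightarrow> shape_eqv t \<sigma> \<sigma>'"
  by (cases \<sigma>; cases \<sigma>') (auto intro: min_eq_mono)

lemma shape_eqv_take:
  assumes eqv: "shape_eqv T (k, R, m) (k', R', m')" and t: "2 * t \<le> T" "1 \<le> t" "T \<le> n"
    and i: "1 \<le> i" "i < k + m"
  obtains i' where "1 \<le> i'" "i' < k' + m'"
    "shape_eqv t (shape_take n (k, R, m) i) (shape_take n (k', R', m') i')"
proof -
  have tT: "t \<le> T" using t by simp
  from eqv have k: "min T k = min T k'" and R: "min T R = min T R'" and m: "min T m = min T m'"
    by simp_all
  show ?thesis
  proof (cases "i \<le> k")
    case True
    obtain i' where i': "i' \<le> k'" "min t i' = min t i" "min t (k' - i') = min t (k - i)"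
      by (rule min_eq_split[OF t(1) k True])
    have "i' < k' + m'"
    proof (cases "i < k")
      case True
      then show ?thesis using min_eq_zero_iff[OF t(2) i'(3)] by simp
    next
      case False
      with i True have "m \<noteq> 0" by simp
      then show ?thesis using min_eq_zero_iff[of T m m'] m t i' by simp
    qed
    moreover have "min t (min n (R + (k - i))) = min t (min n (R' + (k' - i')))"
      using min_eq_add[OF min_eq_mono[OF tT R] i'(3)[symmetric]] tT t(3)
      by (simp add: min.assoc[symmetric] min_absorb1)
    ultimately show ?thesis
      using i' True min_eq_pos_iff[OF t(2) i'(2)] i by (intro that[of i']) simp_all
  next
    case False
    obtain u where u: "u \<le> m'" "min t u = min t (i - k)" "min t (m' - u) = min t (m - (i - k))"
      by (rule min_eq_split[OF t(1) m, of "i - k"]) (use i in simp)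
    have "m - (i - k) \<noteq> 0" using i False by arith
    then have "u < m'" using min_eq_zero_iff[OF t(2) u(3)] by simp
    moreover have "1 \<le> u" using min_eq_pos_iff[OF t(2) u(2)] False by simp
    ultimately show ?thesis using u False min_eq_mono[OF tT k] min_eq_mono[OF tT R]
      by (intro that[of "k' + u"]) simp_all
  qed
qed

lemma shape_eqv_drop:
  assumes eqv: "shape_eqv T (k, R, m) (k', R', m')" and t: "2 * t \<le> T" "1 \<le> t"
    and i: "1 \<le> i" "i < k + m"
  obtains i' where "1 \<le> i'" "i' < k' + m'"
    "shape_eqv t (shape_drop (k, R, m) i) (shape_drop (k', R', m') i')"
proof -
  have tT: "t \<le> T" using t by simp
  from eqv have k: "min T k = min T k'" and R: "min T R = min T R'" and m: "min T m = min T m'"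
    by simp_all
  show ?thesis
  proof (cases "i < k")
    case True
    obtain i' where i': "i' \<le> k'" "min t i' = min t i" "min t (k' - i') = min t (k - i)"
      by (rule min_eq_split[OF t(1) k, of i]) (use True in simp)
    with True min_eq_zero_iff[OF t(2) i'(3)] min_eq_pos_iff[OF t(2) i'(2)] i
      min_eq_mono[OF tT R] min_eq_mono[OF tT m]
    show ?thesis by (intro that[of i']) simp_all
  next
    case False
    obtain u where u: "u \<le> m'" "min t u = min t (i - k)" "min t (m' - u) = min t (m - (i - k))"
      by (rule min_eq_split[OF t(1) m, of "i - k"]) (use i in simp)
    have "m - (i - k) \<noteq> 0" using i False by arith
    then have "u < m'" using min_eq_zero_iff[OF t(2) u(3)] by simp
    moreover have "1 \<le> k' + u"
    proof (cases "k = 0")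
      case True
      with i show ?thesis using min_eq_pos_iff[OF t(2) u(2)] by simp
    next
      case False
      then show ?thesis using min_eq_zero_iff[of T k k'] k t by simp
    qed
    ultimately show ?thesis using u False by (intro that[of "k' + u"]) simp_all
  qed
qed

lemma shape_eqv_extend_right:
  assumes wf: "wf_shape n (k, R, m)" "wf_shape n (k', R', m')"
    and eqv: "shape_eqv T (k, R, m) (k', R', m')" and t: "2 * t \<le> T" "1 \<le> t" "T \<le> n"
    and \<tau>: "wf_shape n \<tau>" "k + m < shape_len \<tau>" "shape_take n \<tau> (k + m) = (k, R, m)"
  obtains \<tau>' where "wf_shape n \<tau>'" "k' + m' < shape_len \<tau>'"
    "shape_take n \<tau>' (k' + m') = (k', R', m')" "shape_eqv t \<tau> \<tau>'"
proof -
  have tT: "t \<le> T" using t by simp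
  from eqv have k: "min T k = min T k'" and R: "min T R = min T R'" and m: "min T m = min T m'"
    by simp_all
  obtain K S M where \<tau>_eq: "\<tau> = (K, S, M)" by (cases \<tau>)
  show ?thesis
  proof (cases "m > 0")
    case True
    with \<tau> \<tau>_eq have "\<not> k + m \<le> K" by (auto split: if_splits)
    with \<tau> \<tau>_eq have KS: "K = k" "S = R" "m < M" by (auto split: if_splits)
    have "m' > 0" using min_eq_zero_iff[of T m m'] m t True by simp
    with wf KS show ?thesis using min_eq_mono[OF tT k] min_eq_mono[OF tT R]
        min_eq_add[OF min_eq_mono[OF tT m], of "M - m" "M - m"]
      by (intro that[of "(k', R', m' + (M - m))"]) (simp_all add: \<tau>_eq)
  next
    case False
    with wf have m0: "m = 0" "m' = 0" "1 \<le> k'" using min_eq_zero_iff[of T m m'] m t by auto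
    with \<tau> \<tau>_eq have Kk: "k \<le> K" "R = min n (S + (K - k))" "1 \<le> (K - k) + M"
      by (auto split: if_splits)
    consider "R < T" | "T \<le> R" "0 < M" | "T \<le> R" "M = 0" by linarith
    then show ?thesis
    proof cases
      case 1
      then have "R' = R" using R by (simp add: min_def split: if_splits)
      with \<tau> \<tau>_eq m0 Kk show ?thesis using min_eq_add[OF min_eq_mono[OF tT k], of "K - k" "K - k"]
        by (intro that[of "(k' + (K - k), S, M)"]) (auto simp: min_def)
    next
      case 2
      with \<tau> \<tau>_eq Kk have "S = 0" "T \<le> K - k" by auto
      moreover have "T \<le> R'" "R' \<le> n" using 2 R wf by (auto simp: min_def split: if_splits)
      ultimately show ?thesis using \<tau>_eq Kk m0 2 t
        by (intro that[of "(k' + R', 0, M)"]) (auto simp: min_def)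
    next
      case 3
      have R'_n: "T \<le> R'" "R' \<le> n" using 3 R wf by (auto simp: min_def split: if_splits)
      with Kk 3 t have "min T (S + (K - k)) = min T R'" by (simp add: min_def split: if_splits)
      then obtain d where d: "d \<le> R'" "min t d = min t (K - k)" "min t (R' - d) = min t S"
        using min_eq_split[OF t(1), of "S + (K - k)" R' "K - k"] by auto
      have "1 \<le> d" using min_eq_pos_iff[OF t(2) d(2)] Kk 3 by simp
      moreover have "R' - d \<le> n" using R'_n by simp
      ultimately show ?thesis using d R'_n m0 3 min_eq_add[OF min_eq_mono[OF tT k] d(2)[symmetric]] Kk
        by (intro that[of "(k' + d, R' - d, 0)"]) (auto simp: \<tau>_eq min_def)
    qed
  qed
qed

lemma shape_eqv_extend_left:
  assumes wf: "wf_shape n (k, R, m)" "wf_shape n (k', R', m')"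
    and eqv: "shape_eqv T (k, R, m) (k', R', m')" and t: "1 \<le> t" "t \<le> T"
    and \<tau>: "wf_shape n \<tau>" "k + m < shape_len \<tau>" "shape_drop \<tau> (shape_len \<tau> - (k + m)) = (k, R, m)"
  obtains \<tau>' where "wf_shape n \<tau>'" "k' + m' < shape_len \<tau>'"
    "shape_drop \<tau>' (shape_len \<tau>' - (k' + m')) = (k', R', m')" "shape_eqv t \<tau> \<tau>'"
proof -
  from eqv have k: "min T k = min T k'" and R: "min T R = min T R'" and m: "min T m = min T m'"
    by simp_all
  obtain K S M where \<tau>_eq: "\<tau> = (K, S, M)" by (cases \<tau>)
  show ?thesis
  proof (cases "k > 0")
    case True
    define i where "i = K + M - (k + m)"
    with \<tau> \<tau>_eq True have KS: "1 \<le> i" "S = R" "M = m" "K = k + i" by (auto split: if_splits)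
    have "k' > 0" using min_eq_zero_iff[of T k k'] k t True by simp
    with wf KS show ?thesis using min_eq_add[OF min_eq_mono[OF t(2) k], of i i]
        min_eq_mono[OF t(2) R] min_eq_mono[OF t(2) m]
      by (intro that[of "(k' + i, R', m')"]) (simp_all add: \<tau>_eq)
  next
    case False
    with wf have k0: "k = 0" "k' = 0" "R = 0" "R' = 0" "1 \<le> m" "1 \<le> m'"
      using min_eq_zero_iff[of T k k'] k t by auto
    define d where "d = M - m"
    with \<tau> \<tau>_eq k0 have Md: "M = m + d" "1 \<le> K + d" "S = 0" by (auto split: if_splits)
    with \<tau> \<tau>_eq k0 show ?thesis using min_eq_add[OF min_eq_mono[OF t(2) m], of d d]
      by (intro that[of "(K, S, m' + d)"]) auto
  qed
qed

text \<open>Halving the threshold at every modal step leaves room for the splits of \<open>min_eq_split\<close>.\<close>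

definition shape_bisim :: "nat \<Rightarrow> nat \<Rightarrow> shape \<Rightarrow> shape \<Rightarrow> bool" where
  "shape_bisim n d \<sigma> \<sigma>' \<longleftrightarrow>
     2 ^ Suc d \<le> n \<and> wf_shape n \<sigma> \<and> wf_shape n \<sigma>' \<and> shape_eqv (2 ^ Suc d) \<sigma> \<sigma>'"

lemma shape_bisim_forward:
  assumes Z: "shape_bisim n (Suc d) \<sigma> \<sigma>'" and r: "shape_rel n r \<sigma> \<tau>"
  obtains \<tau>' where "shape_rel n r \<sigma>' \<tau>'" "shape_bisim n d \<tau> \<tau>'"
proof -
  define t :: nat where "t = 2 ^ Suc d"
  obtain k R m where \<sigma>: "\<sigma> = (k, R, m)" by (cases \<sigma>)
  obtain k' R' m' where \<sigma>': "\<sigma>' = (k', R', m')" by (cases \<sigma>')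
  have t: "1 \<le> t" "2 * t \<le> n" "t \<le> 2 * t" unfolding t_def using Z by (simp_all add: shape_bisim_def)
  have wf: "wf_shape n (k, R, m)" "wf_shape n (k', R', m')"
    and eqv: "shape_eqv (2 * t) (k, R, m) (k', R', m')"
    using Z unfolding shape_bisim_def t_def \<sigma> \<sigma>' by simp_all
  have bisim: "shape_bisim n d \<tau> \<tau>'" if "wf_shape n \<tau>" "wf_shape n \<tau>'" "shape_eqv t \<tau> \<tau>'" for \<tau> \<tau>'
    using that t unfolding shape_bisim_def t_def by simp
  show thesis
  proof (cases r)
    case Dia_B
    with r \<sigma> obtain i where i: "1 \<le> i" "i < k + m" "\<tau> = shape_take n (k, R, m) i" by auto
    obtain i' where "1 \<le> i'" "i' < k' + m'" "shape_eqv t \<tau> (shape_take n (k', R', m') i')"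
      using shape_eqv_take[OF eqv order.refl t(1,2) i(1,2)] i(3) by blast
    with wf i Dia_B show thesis
      by (intro that[of "shape_take n \<sigma>' i'"] bisim) (auto simp: \<sigma> \<sigma>' wf_shape_take)
  next
    case Dia_E
    with r \<sigma> obtain i where i: "1 \<le> i" "i < k + m" "\<tau> = shape_drop (k, R, m) i" by auto
    obtain i' where "1 \<le> i'" "i' < k' + m'" "shape_eqv t \<tau> (shape_drop (k', R', m') i')"
      using shape_eqv_drop[OF eqv order.refl t(1) i(1,2)] i(3) by blast
    with wf i Dia_E show thesis
      by (intro that[of "shape_drop \<sigma>' i'"] bisim) (auto simp: \<sigma> \<sigma>' wf_shape_drop)
  next
    case Dia_Bbar
    with r \<sigma> have \<tau>: "wf_shape n \<tau>" "k + m < shape_len \<tau>" "shape_take n \<tau> (k + m) = (k, R, m)"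
      by simp_all
    obtain \<tau>' where "wf_shape n \<tau>'" "k' + m' < shape_len \<tau>'"
      "shape_take n \<tau>' (k' + m') = (k', R', m')" "shape_eqv t \<tau> \<tau>'"
      using shape_eqv_extend_right[OF wf eqv order.refl t(1,2) \<tau>] by blast
    with \<tau> Dia_Bbar show thesis by (intro that[of \<tau>'] bisim) (simp_all add: \<sigma>')
  next
    case Dia_Ebar
    with r \<sigma> have \<tau>: "wf_shape n \<tau>" "k + m < shape_len \<tau>"
      "shape_drop \<tau> (shape_len \<tau> - (k + m)) = (k, R, m)"
      by simp_all
    obtain \<tau>' where "wf_shape n \<tau>'" "k' + m' < shape_len \<tau>'"
      "shape_drop \<tau>' (shape_len \<tau>' - (k' + m')) = (k', R', m')" "shape_eqv t \<tau> \<tau>'"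
      using shape_eqv_extend_left[OF wf eqv t(1,3) \<tau>] by blast
    with \<tau> Dia_Ebar show thesis by (intro that[of \<tau>'] bisim) (simp_all add: \<sigma>')
  qed
qed

lemma graded_bisim_shape_bisim: "graded_bisim (shape_frame n) (shape_frame n) (shape_bisim n)"
proof (rule graded_bisim_symI)
  fix d \<sigma> \<sigma>'
  assume "shape_bisim n d \<sigma> \<sigma>'"
  then show "shape_bisim n d \<sigma>' \<sigma>" by (simp add: shape_bisim_def shape_eqv_sym)
next
  fix d \<sigma> \<sigma>' p
  assume "shape_bisim n d \<sigma> \<sigma>'"
  then have "min (2 ^ Suc d) (fst \<sigma>) = min (2 ^ Suc d) (fst \<sigma>')"
    unfolding shape_bisim_def by (cases \<sigma>; cases \<sigma>') simp
  then have "fst \<sigma> = 0 \<longleftrightarrow> fst \<sigma>' = 0" by (rule min_eq_zero_iff[rotated]) simp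
  then show "hs_val (shape_frame n) p \<sigma> \<longleftrightarrow> hs_val (shape_frame n) p \<sigma>'"
    by (simp add: shape_frame_def)
next
  fix d \<sigma> \<sigma>'
  assume "shape_bisim n (Suc d) \<sigma> \<sigma>'"
  moreover have "(2::nat) ^ Suc d \<le> 2 ^ Suc (Suc d)" by simp
  ultimately show "shape_bisim n d \<sigma> \<sigma>'"
    unfolding shape_bisim_def by (meson order.trans shape_eqv_mono)
next
  fix d r \<sigma> \<sigma>' \<tau>
  assume Z: "shape_bisim n (Suc d) \<sigma> \<sigma>'" and r: "hs_rel (shape_frame n) r \<sigma> \<tau>"
  from r have "shape_rel n r \<sigma> \<tau>" by (simp add: shape_frame_def)
  with Z obtain \<tau>' where "shape_rel n r \<sigma>' \<tau>'" "shape_bisim n d \<tau> \<tau>'" by (rule shape_bisim_forward)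
  then show "\<exists>\<tau>'. hs_rel (shape_frame n) r \<sigma>' \<tau>' \<and> shape_bisim n d \<tau> \<tau>'"
    by (intro exI[of _ \<tau>']) (simp add: shape_frame_def)
qed

lemma shape_eqv_refl: "shape_eqv T \<sigma> \<sigma>"
  by (cases \<sigma>) simp

lemma shape_from_one_to_zero:
  assumes T: "1 \<le> T" "2 * T \<le> n" and \<sigma>: "wf_shape n (k, R, m)" "hd (shape_trace n (k, R, m)) = 1"
  obtains \<sigma>' where "wf_shape n \<sigma>'" "hd (shape_trace n \<sigma>') = 0" "shape_eqv T (k, R, m) \<sigma>'"
proof -
  have "(if 0 < k then (n - R + 1) - k else Suc n) = 1"
    using \<sigma>(2) unfolding hd_shape_trace[OF \<sigma>(1)] .
  with \<sigma>(1) T have k: "0 < k" "k = n - R" "R \<le> n" "0 < m \<longrightarrow> R = 0"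
    by (auto split: if_splits)
  consider "0 < m" | "m = 0" "T \<le> k" | "m = 0" "k < T" by linarith
  then show thesis
  proof cases
    case 1
    with k T show thesis
      by (intro that[of "(Suc n, 0, m)"]) (auto simp: hd_append upt_conv_Cons min_def)
  next
    case 2
    with k show thesis by (intro that[of "(Suc k, R, 0)"]) (auto simp: hd_append upt_conv_Cons min_def)
  next
    case 3
    with k T have "T \<le> R" by linarith
    with k 3 show thesis by (intro that[of "(k, n, 0)"]) (auto simp: hd_append upt_conv_Cons min_def)
  qed
qed

lemma shape_from_zero_to_one:
  assumes T: "1 \<le> T" "2 * T \<le> n" and \<sigma>: "wf_shape n (k, R, m)" "hd (shape_trace n (k, R, m)) = 0"
  obtains \<sigma>' where "wf_shape n \<sigma>'" "hd (shape_trace n \<sigma>') = 1" "shape_eqv T (k, R, m) \<sigma>'"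
proof -
  have "(if 0 < k then (n - R + 1) - k else Suc n) = 0"
    using \<sigma>(2) unfolding hd_shape_trace[OF \<sigma>(1)] .
  with \<sigma>(1) T have k: "0 < k" "n - R + 1 \<le> k" "R \<le> n" "0 < m \<longrightarrow> R = 0"
    by (auto split: if_splits)
  consider "0 < m" | "m = 0" "k < T" | "m = 0" "T \<le> k" "R < T" | "m = 0" "T \<le> k" "T \<le> R"
    by linarith
  then show thesis
  proof cases
    case 1
    with k T show thesis by (intro that[of "(n, 0, m)"]) (auto simp: hd_append upt_conv_Cons min_def)
  next
    case 2
    with k T show thesis by (intro that[of "(k, n - k, 0)"]) (auto simp: hd_append upt_conv_Cons min_def)
  next
    case 3
    with k T show thesis by (intro that[of "(n - R, R, 0)"]) (auto simp: hd_append upt_conv_Cons min_def)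
  next
    case 4
    with T show thesis by (intro that[of "(T, n - T, 0)"]) (auto simp: hd_append upt_conv_Cons min_def)
  qed
qed

lemma shape_change_start:
  assumes T: "1 \<le> T" "2 * T \<le> n" and s: "s \<le> 1" "s' \<le> 1"
    and \<sigma>: "wf_shape n \<sigma>" "hd (shape_trace n \<sigma>) = s"
  obtains \<sigma>' where "wf_shape n \<sigma>'" "hd (shape_trace n \<sigma>') = s'" "shape_eqv T \<sigma> \<sigma>'"
proof -
  obtain k R m where \<sigma>_eq: "\<sigma> = (k, R, m)" by (cases \<sigma>)
  consider "s' = s" | "s = 1" "s' = 0" | "s = 0" "s' = 1" using s by linarith
  then show thesis
  proof cases
    case 1
    with \<sigma> show thesis using shape_eqv_refl that by blast
  next
    case 2
    with \<sigma> show thesis using shape_from_one_to_zero[OF T] that unfolding \<sigma>_eq by blast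
  next
    case 3
    with \<sigma> show thesis using shape_from_zero_to_one[OF T] that unfolding \<sigma>_eq by blast
  qed
qed

lemma st_models_ladder_change_start:
  fixes \<phi> :: "'ap hs"
  assumes n: "n = 2 * 2 ^ Suc (hs_depth \<phi>)" and s: "s \<le> 1" "s' \<le> 1"
    and "st_models (ladder n s :: (nat, 'ap) kripke) \<phi>"
  shows "st_models (ladder n s' :: (nat, 'ap) kripke) \<phi>"
  unfolding st_models_ladder_iff
proof (intro allI impI)
  fix \<sigma>' assume \<sigma>': "wf_shape n \<sigma>' \<and> hd (shape_trace n \<sigma>') = s'"
  have T: "1 \<le> (2::nat) ^ Suc (hs_depth \<phi>)" "2 * 2 ^ Suc (hs_depth \<phi>) \<le> n" using n by simp_all
  obtain \<sigma> where \<sigma>: "wf_shape n \<sigma>" "hd (shape_trace n \<sigma>) = s"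
    and eqv: "shape_eqv (2 ^ Suc (hs_depth \<phi>)) \<sigma>' \<sigma>"
    using shape_change_start[OF T s(2,1)] \<sigma>' by blast
  with assms(4) have "hs_sat (shape_frame n) \<sigma> \<phi>" unfolding st_models_ladder_iff by blast
  moreover have "shape_bisim n (hs_depth \<phi>) \<sigma>' \<sigma>"
    using \<sigma> \<sigma>' eqv n unfolding shape_bisim_def by simp
  ultimately show "hs_sat (shape_frame n) \<sigma>' \<phi>"
    using graded_bisim_hs_sat[OF graded_bisim_shape_bisim order.refl] by blast
qed

section \<open>Windows and the computation-tree semantics\<close>

text \<open>A window \<open>(xa, xb, \<sigma>)\<close> is the suffix of shape \<open>\<sigma>\<close>, starting at position \<open>xa + xb\<close>, of an
  initial trace whose first \<open>xa\<close> skipped states lie in \<open>{0..n}\<close> and the next \<open>xb\<close> in the top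
  state; paths of the computation tree are exactly such windows.\<close>

type_synonym window = "nat \<times> nat \<times> shape"

fun window_shape :: "window \<Rightarrow> shape" where
  "window_shape (xa, xb, k, R, m) = (xa + k, R, xb + m)"

fun window_start :: "window \<Rightarrow> nat" where
  "window_start (xa, xb, \<sigma>) = xa + xb"

fun window_body :: "window \<Rightarrow> shape" where
  "window_body (xa, xb, \<sigma>) = \<sigma>"

fun wf_window :: "nat \<Rightarrow> window \<Rightarrow> bool" where
  "wf_window n (xa, xb, \<sigma>) \<longleftrightarrow> wf_shape n \<sigma> \<and> (0 < xb \<longrightarrow> fst \<sigma> = 0)"

fun window_with_body :: "window \<Rightarrow> shape \<Rightarrow> window" where
  "window_with_body (xa, xb, \<sigma>) \<sigma>' = (xa, xb, \<sigma>')"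

fun window_drop :: "window \<Rightarrow> nat \<Rightarrow> window" where
  "window_drop (xa, xb, k, R, m) i =
     (if i < k then (xa + i, 0, k - i, R, m) else (xa + k, xb + (i - k), 0, 0, m - (i - k)))"

fun window_extend_left :: "window \<Rightarrow> nat \<Rightarrow> window" where
  "window_extend_left (xa, xb, k, R, m) j =
     (if j \<le> xb then (xa, xb - j, 0, 0, m + j) else (xa - (j - xb), 0, k + (j - xb), R, m + xb))"

definition window_trace :: "nat \<Rightarrow> window \<Rightarrow> nat list" where
  "window_trace n C = shape_trace n (window_shape C)"

definition window_path :: "nat \<Rightarrow> window \<Rightarrow> nat list list" where
  "window_path n C = prefix_path (window_trace n C) (window_start C)"

lemma length_window_trace [simp]: "length (window_trace n C) = shape_len (window_shape C)"
  by (simp add: window_trace_def)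

lemma window_cases: obtains xa xb k R m where "C = (xa, xb, k, R, m)"
  using prod_cases5 by blast

lemma wf_window_shape: "wf_window n C \<Longrightarrow> wf_shape n (window_shape C)"
  by (cases C rule: window_cases) auto

lemma window_start_less: "wf_window n C \<Longrightarrow> window_start C < shape_len (window_shape C)"
  by (cases C rule: window_cases) auto

lemma shape_len_window_body: "wf_window n C \<Longrightarrow> shape_len (window_shape C) - window_start C = shape_len (window_body C)"
  by (cases C rule: window_cases) auto

lemma length_window_path [simp]: "length (window_path n C) = shape_len (window_shape C) - window_start C"
  by (simp add: window_path_def window_trace_def)

lemma shape_take_window_shape:
  assumes "0 < xb \<longrightarrow> fst \<sigma> = 0" "1 \<le> i"
  shows "shape_take n (window_shape (xa, xb, \<sigma>)) (xa + xb + i) = window_shape (xa, xb, shape_take n \<sigma> i)"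
  using assms by (cases \<sigma>) auto

lemma window_drop_simps:
  assumes "wf_window n C" "i < shape_len (window_body C)"
  shows "window_shape (window_drop C i) = window_shape C" "window_start (window_drop C i) = window_start C + i"
    "wf_window n (window_drop C i)" "window_body (window_drop C i) = shape_drop (window_body C) i"
  using assms by (cases C rule: window_cases; auto)+

lemma window_extend_left_simps:
  assumes "wf_window n C" "1 \<le> j" "j \<le> window_start C"
  shows "window_shape (window_extend_left C j) = window_shape C"
    "window_start (window_extend_left C j) = window_start C - j" "wf_window n (window_extend_left C j)"
  using assms by (cases C rule: window_cases; auto)+

lemma window_with_body_simps [simp]:
  "window_start (window_with_body C \<sigma>) = window_start C" "window_body (window_with_body C \<sigma>) = \<sigma>"
  by (cases C rule: window_cases; simp)+

lemma all_top_window_trace: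
  assumes "wf_window n C"
  shows "(\<forall>i. window_start C \<le> i \<and> i < shape_len (window_shape C) \<longrightarrow> window_trace n C ! i = Suc n)
    \<longleftrightarrow> fst (window_body C) = 0"
proof -
  obtain xa xb k R m where C: "C = (xa, xb, k, R, m)" by (rule window_cases)
  with assms have xb: "0 < xb \<longrightarrow> k = 0" by auto
  have nth: "window_trace n C ! i = (if i < xa + k then (n - R + 1 + i) - (xa + k) else Suc n)"
    if "i < xa + k + (xb + m)" for i
    using nth_shape_trace[OF that] C by (simp add: window_trace_def)
  show ?thesis
  proof
    assume top: "\<forall>i. window_start C \<le> i \<and> i < shape_len (window_shape C) \<longrightarrow> window_trace n C ! i = Suc n"
    show "fst (window_body C) = 0"
    proof (rule ccontr)
      assume "fst (window_body C) \<noteq> 0"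
      with C xb have "0 < k" "xb = 0" by auto
      with top C nth[of xa] show False by auto
    qed
  next
    assume "fst (window_body C) = 0"
    with C nth show "\<forall>i. window_start C \<le> i \<and> i < shape_len (window_shape C) \<longrightarrow> window_trace n C ! i = Suc n"
      by auto
  qed
qed

lemma window_take_body:
  assumes C: "wf_window n C" and i: "1 \<le> i" "i \<le> shape_len (window_body C)"
  defines "C' \<equiv> window_with_body C (shape_take n (window_body C) i)"
  shows "wf_window n C'" "window_trace n C' = take (window_start C + i) (window_trace n C)"
    "take i (window_path n C) = window_path n C'"
proof -
  obtain xa xb \<sigma> where C_eq: "C = (xa, xb, \<sigma>)" by (cases C) auto
  with C have \<sigma>: "wf_shape n \<sigma>" "0 < xb \<longrightarrow> fst \<sigma> = 0" by simp_all
  with i C_eq show wf: "wf_window n C'"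
    unfolding C'_def by (cases \<sigma>) (auto simp: wf_shape_take[of n \<sigma> i])
  have "window_shape C' = shape_take n (window_shape C) (window_start C + i)"
    using shape_take_window_shape[OF \<sigma>(2) i(1), of n xa] unfolding C'_def C_eq by simp
  then show tr: "window_trace n C' = take (window_start C + i) (window_trace n C)"
    using take_shape_trace[of "window_start C + i" "window_shape C" n] i shape_len_window_body[OF C]
    unfolding window_trace_def by simp
  have "take i (window_path n C) = prefix_path (take (window_start C + i) (window_trace n C)) (window_start C)"
    using take_prefix_path[of i "window_trace n C" "window_start C"] i shape_len_window_body[OF C]
    by (simp add: window_path_def window_trace_def)
  then show "take i (window_path n C) = window_path n C'"
    unfolding window_path_def tr by (simp add: C'_def)
qed

lemma window_path_drop:
  assumes "wf_window n C" "i < shape_len (window_body C)"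
  shows "window_path n (window_drop C i) = drop i (window_path n C)"
  using window_drop_simps[OF assms] by (simp add: window_path_def window_trace_def drop_prefix_path)

lemma window_path_extend_left:
  assumes "wf_window n C" "1 \<le> j" "j \<le> window_start C"
  shows "window_path n (window_extend_left C j) = prefix_path (window_trace n C) (window_start C - j)"
  using window_extend_left_simps[OF assms] by (simp add: window_path_def window_trace_def)

lemma window_with_body_extend:
  assumes C: "wf_window n C" and \<sigma>: "wf_shape n \<sigma>" "shape_len (window_body C) < shape_len \<sigma>"
    "shape_take n \<sigma> (shape_len (window_body C)) = window_body C"
  shows "wf_window n (window_with_body C \<sigma>)"
    "shape_len (window_shape C) < shape_len (window_shape (window_with_body C \<sigma>))"
    "shape_take n (window_shape (window_with_body C \<sigma>)) (shape_len (window_shape C)) = window_shape C"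
proof -
  obtain xa xb k R m where C_eq: "C = (xa, xb, k, R, m)" by (rule window_cases)
  have len: "1 \<le> k + m" using C C_eq by simp
  have top: "0 < xb \<longrightarrow> fst \<sigma> = 0"
    using C C_eq \<sigma>(3) len by (cases \<sigma>) (auto split: if_splits)
  with \<sigma> C_eq show "wf_window n (window_with_body C \<sigma>)" by simp
  show "shape_len (window_shape C) < shape_len (window_shape (window_with_body C \<sigma>))"
    using \<sigma>(2) C_eq by (cases \<sigma>) auto
  have "shape_take n (window_shape (xa, xb, \<sigma>)) (xa + xb + (k + m)) = window_shape C"
    using shape_take_window_shape[OF top len, of n xa] \<sigma>(3) C_eq by simp
  then show "shape_take n (window_shape (window_with_body C \<sigma>)) (shape_len (window_shape C)) = window_shape C"
    using C_eq by (simp add: add.commute add.left_commute)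
qed

lemma shape_extending_window_obtain:
  assumes C: "wf_window n C" and \<tau>: "wf_shape n \<tau>" "shape_len (window_shape C) < shape_len \<tau>"
    "shape_take n \<tau> (shape_len (window_shape C)) = window_shape C"
  obtains \<sigma> where "wf_shape n \<sigma>" "shape_len (window_body C) < shape_len \<sigma>"
    "shape_take n \<sigma> (shape_len (window_body C)) = window_body C" "\<tau> = window_shape (window_with_body C \<sigma>)"
proof -
  obtain xa xb k R m where C_eq: "C = (xa, xb, k, R, m)" by (rule window_cases)
  obtain K S M where \<tau>_eq: "\<tau> = (K, S, M)" by (cases \<tau>)
  have wf: "1 \<le> k + m" "R \<le> n" "0 < m \<longrightarrow> R = 0" "k = 0 \<longrightarrow> R = 0" "0 < xb \<longrightarrow> k = 0"
    using C C_eq by auto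
  have wf\<tau>: "1 \<le> K + M" "S \<le> n" "0 < M \<longrightarrow> S = 0" "K = 0 \<longrightarrow> S = 0" using \<tau> \<tau>_eq by auto
  have lt: "xa + k + xb + m < K + M" using \<tau> C_eq \<tau>_eq by simp
  show thesis
  proof (cases "xa + k + (xb + m) \<le> K")
    case True
    with \<tau>(3) C_eq \<tau>_eq have "R = min n (S + (K - (xa + k + (xb + m))))" "xb + m = 0" by auto
    with wf\<tau> lt True C_eq \<tau>_eq show thesis by (intro that[of "(K - xa, S, M)"]) auto
  next
    case False
    with \<tau>(3) C_eq \<tau>_eq have "K = xa + k" "S = R" by (auto split: if_splits)
    with wf wf\<tau> lt C_eq \<tau>_eq show thesis
      by (intro that[of "(k, R, M - xb)"]) (auto simp: min_def)
  qed
qed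

fun window_rel :: "nat \<Rightarrow> hs_dia \<Rightarrow> window \<Rightarrow> window \<Rightarrow> bool" where
  "window_rel n Dia_B C C' \<longleftrightarrow> (\<exists>i. 1 \<le> i \<and> i < shape_len (window_body C)
     \<and> C' = window_with_body C (shape_take n (window_body C) i))"
| "window_rel n Dia_E C C' \<longleftrightarrow> (\<exists>i. 1 \<le> i \<and> i < shape_len (window_body C) \<and> C' = window_drop C i)"
| "window_rel n Dia_Bbar C C' \<longleftrightarrow> (\<exists>\<sigma>. wf_shape n \<sigma> \<and> shape_len (window_body C) < shape_len \<sigma>
     \<and> shape_take n \<sigma> (shape_len (window_body C)) = window_body C \<and> C' = window_with_body C \<sigma>)"
| "window_rel n Dia_Ebar C C' \<longleftrightarrow> (\<exists>j. 1 \<le> j \<and> j \<le> window_start C \<and> C' = window_extend_left C j)"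

definition window_frame :: "nat \<Rightarrow> (window, 'ap) hs_frame" where
  "window_frame n = \<lparr>hs_rel = window_rel n, hs_val = (\<lambda>_ C. fst (window_body C) = 0)\<rparr>"

lemma initial_trace_window_trace:
  "wf_window n C \<Longrightarrow> hd (window_trace n C) = s0 \<Longrightarrow> initial_trace (ladder n s0) (window_trace n C)"
  unfolding initial_trace_def window_trace_def by (simp add: is_trace_shape_trace wf_window_shape)

lemma window_path_with_body:
  assumes C: "wf_window n C" "hd (window_trace n C) = s0"
    and \<sigma>: "wf_shape n \<sigma>" "shape_len (window_body C) < shape_len \<sigma>"
      "shape_take n \<sigma> (shape_len (window_body C)) = window_body C"
  defines "C' \<equiv> window_with_body C \<sigma>"
  shows "hd (window_trace n C') = s0"
    "is_trace (comp_tree (ladder n s0 :: (nat, 'ap) kripke)) (window_path n C')"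
    "take (length (window_path n C)) (window_path n C') = window_path n C"
proof -
  note ext = window_with_body_extend[OF C(1) \<sigma>, folded C'_def]
  have tr: "take (shape_len (window_shape C)) (window_trace n C') = window_trace n C"
    using take_shape_trace[of "shape_len (window_shape C)" "window_shape C'" n] ext
      shape_len_pos[OF wf_window_shape[OF C(1)]] unfolding window_trace_def by simp
  then show hd: "hd (window_trace n C') = s0"
    using C(2) shape_len_pos[OF wf_window_shape[OF C(1)]] by (metis hd_take less_le_trans zero_less_one)
  show "is_trace (comp_tree (ladder n s0 :: (nat, 'ap) kripke)) (window_path n C')"
    unfolding window_path_def using window_start_less[OF ext(1)]
    by (intro is_trace_comp_tree_prefix_path initial_trace_window_trace ext(1) hd) simp
  show "take (length (window_path n C)) (window_path n C') = window_path n C"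
    using take_prefix_path[of "length (window_path n C)" "window_trace n C'" "window_start C"] ext
      window_start_less[OF C(1)] tr
    by (simp add: window_path_def C'_def window_trace_def)
qed

lemma window_rel_forward:
  assumes C: "wf_window n C" "hd (window_trace n C) = s0" and r: "window_rel n r C C'"
  shows "wf_window n C' \<and> hd (window_trace n C') = s0 \<and>
    trace_rel (comp_tree (ladder n s0 :: (nat, 'ap) kripke)) r (window_path n C) (window_path n C')"
proof (cases r)
  case Dia_B
  with r obtain i where i: "1 \<le> i" "i < shape_len (window_body C)"
    and C': "C' = window_with_body C (shape_take n (window_body C) i)" by auto
  note take = window_take_body[OF C(1) i(1) less_imp_le[OF i(2)], folded C']
  with C i Dia_B show ?thesis by (auto simp: shape_len_window_body)
next
  case Dia_E
  with r obtain i where i: "1 \<le> i" "i < shape_len (window_body C)" and C': "C' = window_drop C i" by auto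
  with C Dia_E show ?thesis
    by (auto simp: window_drop_simps window_path_drop window_trace_def shape_len_window_body)
next
  case Dia_Bbar
  from r[unfolded Dia_Bbar window_rel.simps] obtain \<sigma> where \<sigma>: "wf_shape n \<sigma>"
    "shape_len (window_body C) < shape_len \<sigma>" "shape_take n \<sigma> (shape_len (window_body C)) = window_body C"
    and C': "C' = window_with_body C \<sigma>" by blast
  have "hd (window_trace n C') = s0"
    "is_trace (comp_tree (ladder n s0 :: (nat, 'ap) kripke)) (window_path n C')"
    "take (length (window_path n C)) (window_path n C') = window_path n C"
    unfolding C' by (rule window_path_with_body[OF C \<sigma>])+
  with window_with_body_extend[OF C(1) \<sigma>] window_start_less[OF C(1)] C' Dia_Bbar show ?thesis by simp
next
  case Dia_Ebar
  with r obtain j where j: "1 \<le> j" "j \<le> window_start C" and C': "C' = window_extend_left C j" by auto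
  have "is_trace (comp_tree (ladder n s0 :: (nat, 'ap) kripke)) (window_path n C')"
    unfolding window_path_extend_left[OF C(1) j, folded C']
    using window_start_less[OF C(1)]
    by (intro is_trace_comp_tree_prefix_path initial_trace_window_trace C) simp
  moreover have "drop j (window_path n C') = window_path n C"
    using window_path_extend_left[OF C(1) j] j by (simp add: C' drop_prefix_path window_path_def)
  ultimately show ?thesis
    using C j window_extend_left_simps[OF C(1) j] window_start_less[OF C(1)] Dia_Ebar
    by (simp add: C' window_trace_def window_path_def)
qed

lemma comp_tree_extension_obtain:
  assumes C: "wf_window n C"
    and L': "is_trace (comp_tree (ladder n s0 :: (nat, 'ap) kripke)) L'"
    and len: "length (window_path n C) < length L'"
    and pre: "take (length (window_path n C)) L' = window_path n C"
  obtains \<tau> where "wf_shape n \<tau>" "shape_len (window_shape C) < shape_len \<tau>"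
    "shape_take n \<tau> (shape_len (window_shape C)) = window_shape C"
    "L' = prefix_path (shape_trace n \<tau>) (window_start C)"
proof -
  from L' obtain \<rho> x where \<rho>: "initial_trace (ladder n s0 :: (nat, 'ap) kripke) \<rho>" "x < length \<rho>"
    and L'_eq: "L' = prefix_path \<rho> x" by (rule comp_tree_trace_obtain)
  define l where "l = shape_len (window_body C)"
  have l: "1 \<le> l" "length (window_path n C) = l" "window_start C + l = shape_len (window_shape C)"
    using shape_len_window_body[OF C] window_start_less[OF C] by (simp_all add: l_def)
  have "prefix_path (take (x + l) \<rho>) x = window_path n C"
    using pre take_prefix_path[of l \<rho> x] len l L'_eq by simp
  then have "take (x + l) \<rho> = window_trace n C" and x: "x = window_start C"
    using prefix_path_inj[of x "take (x + l) \<rho>" "window_start C" "window_trace n C"] l len L'_eq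
      window_start_less[OF C] by (simp_all add: window_path_def)
  moreover obtain \<tau> where \<tau>: "wf_shape n \<tau>" "\<rho> = shape_trace n \<tau>"
    using \<rho>(1) unfolding initial_trace_def by (blast elim: trace_ladder_obtain)
  ultimately have lt: "shape_len (window_shape C) < shape_len \<tau>"
    and "shape_trace n (shape_take n \<tau> (shape_len (window_shape C))) = shape_trace n (window_shape C)"
    using len l L'_eq take_shape_trace[of "shape_len (window_shape C)" \<tau> n]
    by (simp_all add: window_trace_def)
  moreover have "wf_shape n (shape_take n \<tau> (shape_len (window_shape C)))"
    using wf_shape_take[OF \<tau>(1)] lt shape_len_pos[OF wf_window_shape[OF C]] by simp
  ultimately have "shape_take n \<tau> (shape_len (window_shape C)) = window_shape C"
    using shape_trace_inj wf_window_shape[OF C] by blast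
  with \<tau> lt x L'_eq show thesis using that by blast
qed

lemma window_rel_backward:
  assumes C: "wf_window n C" "hd (window_trace n C) = s0"
    and r: "trace_rel (comp_tree (ladder n s0 :: (nat, 'ap) kripke)) r (window_path n C) L'"
  obtains C' where "window_rel n r C C'" "L' = window_path n C'"
proof (cases r)
  case Dia_B
  with r obtain i where i: "1 \<le> i" "i < shape_len (window_body C)" "L' = take i (window_path n C)"
    using shape_len_window_body[OF C(1)] by auto
  with window_take_body[OF C(1) i(1) less_imp_le[OF i(2)]] Dia_B show thesis by (intro that) auto
next
  case Dia_E
  with r obtain i where i: "1 \<le> i" "i < shape_len (window_body C)" "L' = drop i (window_path n C)"
    using shape_len_window_body[OF C(1)] by auto
  with window_path_drop[OF C(1) i(2)] Dia_E show thesis by (intro that) auto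
next
  case Dia_Bbar
  with r have "is_trace (comp_tree (ladder n s0 :: (nat, 'ap) kripke)) L'"
    "length (window_path n C) < length L'" "take (length (window_path n C)) L' = window_path n C"
    by simp_all
  then obtain \<tau> where \<tau>: "wf_shape n \<tau>" "shape_len (window_shape C) < shape_len \<tau>"
    "shape_take n \<tau> (shape_len (window_shape C)) = window_shape C"
    and L': "L' = prefix_path (shape_trace n \<tau>) (window_start C)"
    by (rule comp_tree_extension_obtain[OF C(1)])
  from C(1) \<tau>(1-3) obtain \<sigma> where \<sigma>: "wf_shape n \<sigma>" "shape_len (window_body C) < shape_len \<sigma>"
    "shape_take n \<sigma> (shape_len (window_body C)) = window_body C" "\<tau> = window_shape (window_with_body C \<sigma>)"
    by (rule shape_extending_window_obtain)
  have "window_rel n r C (window_with_body C \<sigma>)"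
    using \<sigma>(1-3) unfolding Dia_Bbar window_rel.simps by blast
  moreover have "L' = window_path n (window_with_body C \<sigma>)"
    using \<sigma>(4) L' by (simp add: window_path_def window_trace_def)
  ultimately show thesis by (rule that)
next
  case Dia_Ebar
  with r have L': "is_trace (comp_tree (ladder n s0 :: (nat, 'ap) kripke)) L'"
    and len: "length (window_path n C) < length L'"
    and suf: "drop (length L' - length (window_path n C)) L' = window_path n C" by simp_all
  from L' obtain \<rho> x where \<rho>: "x < length \<rho>" and L'_eq: "L' = prefix_path \<rho> x"
    by (rule comp_tree_trace_obtain)
  define j where "j = length L' - length (window_path n C)"
  have j: "1 \<le> j" using len by (simp add: j_def)
  have "prefix_path \<rho> (x + j) = prefix_path (window_trace n C) (window_start C)"
    using suf L'_eq by (simp add: j_def drop_prefix_path window_path_def)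
  moreover have "x + j < length \<rho>"
    using len L'_eq window_start_less[OF C(1)] by (simp add: j_def)
  ultimately have "\<rho> = window_trace n C" "x + j = window_start C"
    using prefix_path_inj[of "x + j" \<rho> "window_start C" "window_trace n C"] window_start_less[OF C(1)]
    by simp_all
  moreover have "j \<le> window_start C" "x = window_start C - j" using calculation(2) by simp_all
  ultimately show thesis using j L'_eq window_path_extend_left[OF C(1) j] Dia_Ebar
    by (intro that[of "window_extend_left C j"]) auto
qed

lemma st_holds_window_path:
  fixes \<phi> :: "'ap hs"
  assumes "wf_window n C" "hd (window_trace n C) = s0"
  shows "st_holds (comp_tree (ladder n s0 :: (nat, 'ap) kripke)) (window_path n C) \<phi>
    \<longleftrightarrow> hs_sat (window_frame n) C \<phi>"
  unfolding st_holds_iff_hs_sat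
proof (rule bisim_hs_sat[where R = "\<lambda>C L. wf_window n C \<and> hd (window_trace n C) = s0 \<and> L = window_path n C",
      symmetric])
  fix C L p
  assume C: "wf_window n C \<and> hd (window_trace n C) = s0 \<and> L = window_path n C"
  have "hs_val (trace_frame (comp_tree (ladder n s0 :: (nat, 'ap) kripke))) p
      (prefix_path (window_trace n C) (window_start C))
    \<longleftrightarrow> (\<forall>i. window_start C \<le> i \<and> i < length (window_trace n C)
      \<longrightarrow> p \<in> label (ladder n s0 :: (nat, 'ap) kripke) (window_trace n C ! i))"
    by (rule hs_val_comp_tree_prefix_path) (use window_start_less[OF conjunct1[OF C]] in simp)
  with C show "hs_val (window_frame n) p C
      \<longleftrightarrow> hs_val (trace_frame (comp_tree (ladder n s0 :: (nat, 'ap) kripke))) p L"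
    using all_top_window_trace[of n C] by (simp add: window_frame_def window_path_def)
next
  fix r C L C'
  assume "wf_window n C \<and> hd (window_trace n C) = s0 \<and> L = window_path n C" "hs_rel (window_frame n) r C C'"
  then show "\<exists>L'. hs_rel (trace_frame (comp_tree (ladder n s0 :: (nat, 'ap) kripke))) r L L'
      \<and> wf_window n C' \<and> hd (window_trace n C') = s0 \<and> L' = window_path n C'"
    using window_rel_forward[of n C s0 r C'] by (auto simp: window_frame_def trace_frame_def)
next
  fix r C L L'
  assume C: "wf_window n C \<and> hd (window_trace n C) = s0 \<and> L = window_path n C"
    and rel: "hs_rel (trace_frame (comp_tree (ladder n s0 :: (nat, 'ap) kripke))) r L L'"
  from rel C have "trace_rel (comp_tree (ladder n s0 :: (nat, 'ap) kripke)) r (window_path n C) L'"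
    by (simp add: trace_frame_def)
  with C obtain C' where C': "window_rel n r C C'" "L' = window_path n C'"
    using window_rel_backward by blast
  moreover have "wf_window n C' \<and> hd (window_trace n C') = s0"
    using window_rel_forward[of n C s0 r C'] C C'(1) by blast
  ultimately show "\<exists>C'. hs_rel (window_frame n) r C C'
      \<and> wf_window n C' \<and> hd (window_trace n C') = s0 \<and> L' = window_path n C'"
    by (intro exI[of _ C']) (simp add: window_frame_def)
qed (use assms in simp)

lemma ct_models_ladder_iff:
  "ct_models (ladder n s0 :: (nat, 'ap) kripke) \<phi> \<longleftrightarrow>
     (\<forall>\<sigma>. wf_shape n \<sigma> \<and> hd (shape_trace n \<sigma>) = s0 \<longrightarrow> hs_sat (window_frame n) (0, 0, \<sigma>) \<phi>)"
proof -
  have C: "wf_window n (0, 0, \<sigma>) \<longleftrightarrow> wf_shape n \<sigma>" "window_trace n (0, 0, \<sigma>) = shape_trace n \<sigma>"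
    "window_path n (0, 0, \<sigma>) = prefix_path (shape_trace n \<sigma>) 0" for \<sigma>
    by (cases \<sigma>; simp add: window_path_def window_trace_def)+
  have "st_holds (comp_tree (ladder n s0 :: (nat, 'ap) kripke)) (prefix_path (shape_trace n \<sigma>) 0) \<phi>
      \<longleftrightarrow> hs_sat (window_frame n) (0, 0, \<sigma>) \<phi>" if "wf_shape n \<sigma>" "hd (shape_trace n \<sigma>) = s0" for \<sigma>
    using st_holds_window_path[of n "(0, 0, \<sigma>)" s0 \<phi>] that C by simp
  then show ?thesis unfolding ct_models_iff_prefix_paths initial_trace_ladder_iff by blast
qed

fun window_eqv :: "nat \<Rightarrow> window \<Rightarrow> window \<Rightarrow> bool" where
  "window_eqv T (xa, xb, \<sigma>) (xa', xb', \<sigma>') \<longleftrightarrow>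
     min T xa = min T xa' \<and> min T xb = min T xb' \<and> shape_eqv T \<sigma> \<sigma>'"

lemma window_eqv_drop:
  assumes eqv: "window_eqv T (xa, xb, k, R, m) (xa', xb', k', R', m')" and t: "2 * t \<le> T" "1 \<le> t"
    and i: "1 \<le> i" "i < k + m"
  obtains i' where "1 \<le> i'" "i' < k' + m'"
    "window_eqv t (window_drop (xa, xb, k, R, m) i) (window_drop (xa', xb', k', R', m') i')"
proof -
  have tT: "t \<le> T" using t by simp
  from eqv have T: "min T xa = min T xa'" "min T xb = min T xb'" "min T k = min T k'" "min T R = min T R'"
    "min T m = min T m'" by simp_all
  then have t_eq: "min t xa = min t xa'" "min t xb = min t xb'" "min t k = min t k'" "min t R = min t R'"
    "min t m = min t m'" using min_eq_mono[OF tT] by blast+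
  show ?thesis
  proof (cases "i < k")
    case True
    obtain i' where i': "i' \<le> k'" "min t i' = min t i" "min t (k' - i') = min t (k - i)"
      by (rule min_eq_split[OF t(1) T(3), of i]) (use True in simp)
    have "k' - i' \<noteq> 0" using min_eq_zero_iff[OF t(2) i'(3)] True by simp
    with i' True i min_eq_pos_iff[OF t(2) i'(2)] min_eq_add[OF t_eq(1) i'(2)[symmetric]] t_eq
    show ?thesis by (intro that[of i']) simp_all
  next
    case False
    obtain u where u: "u \<le> m'" "min t u = min t (i - k)" "min t (m' - u) = min t (m - (i - k))"
      by (rule min_eq_split[OF t(1) T(5), of "i - k"]) (use i in simp)
    have "m - (i - k) \<noteq> 0" using i False by arith
    then have "u < m'" using min_eq_zero_iff[OF t(2) u(3)] by simp
    moreover have "1 \<le> k' + u"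
    proof (cases "k = 0")
      case True
      with i show ?thesis using min_eq_pos_iff[OF t(2) u(2)] by simp
    next
      case False
      then show ?thesis using min_eq_zero_iff[OF t(2) t_eq(3)] by simp
    qed
    ultimately show ?thesis
      using u False min_eq_add[OF t_eq(1) t_eq(3)] min_eq_add[OF t_eq(2) u(2)[symmetric]]
      by (intro that[of "k' + u"]) simp_all
  qed
qed

lemma window_eqv_extend_left:
  assumes eqv: "window_eqv T (xa, xb, k, R, m) (xa', xb', k', R', m')" and t: "2 * t \<le> T" "1 \<le> t"
    and j: "1 \<le> j" "j \<le> xa + xb"
  obtains j' where "1 \<le> j'" "j' \<le> xa' + xb'"
    "window_eqv t (window_extend_left (xa, xb, k, R, m) j) (window_extend_left (xa', xb', k', R', m') j')"
proof -
  have tT: "t \<le> T" using t by simp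
  from eqv have T: "min T xa = min T xa'" "min T xb = min T xb'" "min T k = min T k'" "min T R = min T R'"
    "min T m = min T m'" by simp_all
  then have t_eq: "min t xa = min t xa'" "min t xb = min t xb'" "min t k = min t k'" "min t R = min t R'"
    "min t m = min t m'" using min_eq_mono[OF tT] by blast+
  show ?thesis
  proof (cases "j \<le> xb")
    case True
    obtain j' where j': "j' \<le> xb'" "min t j' = min t j" "min t (xb' - j') = min t (xb - j)"
      by (rule min_eq_split[OF t(1) T(2) True])
    have "1 \<le> j'" using min_eq_pos_iff[OF t(2) j'(2)] j(1) by simp
    moreover have "min t (m + j) = min t (m' + j')" using min_eq_add[OF t_eq(5) j'(2)[symmetric]] .
    ultimately show ?thesis using True j'(1,3) t_eq(1)
      by (intro that[of j']) auto
  next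
    case False
    obtain u where u: "u \<le> xa'" "min t u = min t (j - xb)" "min t (xa' - u) = min t (xa - (j - xb))"
      by (rule min_eq_split[OF t(1) T(1), of "j - xb"]) (use j in simp)
    have "1 \<le> u" using min_eq_pos_iff[OF t(2) u(2)] False by simp
    moreover have "min t (k + (j - xb)) = min t (k' + u)" using min_eq_add[OF t_eq(3) u(2)[symmetric]] .
    moreover have "min t (m + xb) = min t (m' + xb')" using min_eq_add[OF t_eq(5) t_eq(2)] .
    ultimately show ?thesis using False u(1,3) t_eq(4)
      by (intro that[of "xb' + u"]) auto
  qed
qed

definition window_bisim :: "nat \<Rightarrow> nat \<Rightarrow> window \<Rightarrow> window \<Rightarrow> bool" where
  "window_bisim n d C C' \<longleftrightarrow>
     2 ^ Suc d \<le> n \<and> wf_window n C \<and> wf_window n C' \<and> window_eqv (2 ^ Suc d) C C'"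

lemma window_eqv_sym: "window_eqv T C C' \<Longrightarrow> window_eqv T C' C"
  by (cases C rule: window_cases; cases C' rule: window_cases) (auto simp: shape_eqv_sym)

lemma window_eqv_mono: "t \<le> T \<Longrightarrow> window_eqv T C C' \<Longrightarrow> window_eqv t C C'"
  by (cases C rule: window_cases; cases C' rule: window_cases)
    (auto intro: min_eq_mono shape_eqv_mono)

lemma window_eqv_with_body:
  "t \<le> T \<Longrightarrow> window_eqv T C C' \<Longrightarrow> shape_eqv t \<sigma> \<sigma>' \<Longrightarrow>
    window_eqv t (window_with_body C \<sigma>) (window_with_body C' \<sigma>')"
  by (cases C rule: window_cases; cases C' rule: window_cases) (auto intro: min_eq_mono)

lemma window_eqv_take:
  assumes eqv: "window_eqv T C C'" and t: "2 * t \<le> T" "1 \<le> t" "T \<le> n"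
    and i: "1 \<le> i" "i < shape_len (window_body C)"
  obtains i' where "1 \<le> i'" "i' < shape_len (window_body C')"
    "window_eqv t (window_with_body C (shape_take n (window_body C) i))
       (window_with_body C' (shape_take n (window_body C') i'))"
proof -
  obtain xa xb k R m where C: "C = (xa, xb, k, R, m)" by (rule window_cases)
  obtain xa' xb' k' R' m' where C': "C' = (xa', xb', k', R', m')" by (rule window_cases)
  from eqv have body: "shape_eqv T (k, R, m) (k', R', m')" by (simp add: C C')
  from i have "1 \<le> i" "i < k + m" by (simp_all add: C)
  then obtain i' where "1 \<le> i'" "i' < k' + m'"
    "shape_eqv t (shape_take n (k, R, m) i) (shape_take n (k', R', m') i')"
    by (rule shape_eqv_take[OF body t])
  with window_eqv_with_body[OF _ eqv] t show thesis by (intro that[of i']) (simp_all add: C C')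
qed

lemma window_eqv_extend_right:
  assumes wf: "wf_window n C" "wf_window n C'"
    and eqv: "window_eqv T C C'" and t: "2 * t \<le> T" "1 \<le> t" "T \<le> n"
    and \<tau>: "wf_shape n \<tau>" "shape_len (window_body C) < shape_len \<tau>"
      "shape_take n \<tau> (shape_len (window_body C)) = window_body C"
  obtains \<tau>' where "wf_shape n \<tau>'" "shape_len (window_body C') < shape_len \<tau>'"
    "shape_take n \<tau>' (shape_len (window_body C')) = window_body C'"
    "window_eqv t (window_with_body C \<tau>) (window_with_body C' \<tau>')"
proof -
  obtain xa xb k R m where C: "C = (xa, xb, k, R, m)" by (rule window_cases)
  obtain xa' xb' k' R' m' where C': "C' = (xa', xb', k', R', m')" by (rule window_cases)
  from wf eqv have body: "wf_shape n (k, R, m)" "wf_shape n (k', R', m')"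
    "shape_eqv T (k, R, m) (k', R', m')" by (simp_all add: C C')
  from \<tau> have "k + m < shape_len \<tau>" "shape_take n \<tau> (k + m) = (k, R, m)" by (simp_all add: C)
  then obtain \<tau>' where "wf_shape n \<tau>'" "k' + m' < shape_len \<tau>'"
    "shape_take n \<tau>' (k' + m') = (k', R', m')" "shape_eqv t \<tau> \<tau>'"
    by (rule shape_eqv_extend_right[OF body t \<tau>(1)])
  with window_eqv_with_body[OF _ eqv] t show thesis by (intro that[of \<tau>']) (simp_all add: C')
qed

lemma window_bisim_forward:
  assumes Z: "window_bisim n (Suc d) C C'" and r: "window_rel n r C D"
  obtains D' where "window_rel n r C' D'" "window_bisim n d D D'"
proof -
  define t :: nat where "t = 2 ^ Suc d"
  have t: "2 * t \<le> 2 * t" "1 \<le> t" "2 * t \<le> n" unfolding t_def using Z by (simp_all add: window_bisim_def)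
  have wf: "wf_window n C" "wf_window n C'" and eqv: "window_eqv (2 * t) C C'"
    using Z unfolding window_bisim_def t_def by simp_all
  have bisim: "window_bisim n d D D'" if "wf_window n D" "wf_window n D'" "window_eqv t D D'" for D D'
    using that t unfolding window_bisim_def t_def by simp
  show thesis
  proof (cases r)
    case Dia_B
    with r obtain i where i: "1 \<le> i" "i < shape_len (window_body C)"
      and D: "D = window_with_body C (shape_take n (window_body C) i)" by auto
    obtain i' where "1 \<le> i'" "i' < shape_len (window_body C')"
      "window_eqv t D (window_with_body C' (shape_take n (window_body C') i'))"
      using window_eqv_take[OF eqv t i] unfolding D by blast
    with i wf window_take_body(1) Dia_B show thesis
      by (intro that[of "window_with_body C' (shape_take n (window_body C') i')"] bisim) (auto simp: D)
  next
    case Dia_E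
    with r obtain i where i: "1 \<le> i" "i < shape_len (window_body C)" and D: "D = window_drop C i" by auto
    obtain xa xb k R m where C: "C = (xa, xb, k, R, m)" by (rule window_cases)
    obtain xa' xb' k' R' m' where C': "C' = (xa', xb', k', R', m')" by (rule window_cases)
    obtain i' where i': "1 \<le> i'" "i' < k' + m'" "window_eqv t D (window_drop C' i')"
      using window_eqv_drop[OF eqv[unfolded C C'] t(1,2)] i unfolding C C' D by auto
    with i wf Dia_E show thesis
      by (intro that[of "window_drop C' i'"] bisim) (auto simp: C C' D window_drop_simps)
  next
    case Dia_Bbar
    from r[unfolded Dia_Bbar window_rel.simps] obtain \<tau> where \<tau>: "wf_shape n \<tau>"
      "shape_len (window_body C) < shape_len \<tau>" "shape_take n \<tau> (shape_len (window_body C)) = window_body C"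
      and D: "D = window_with_body C \<tau>" by blast
    obtain \<tau>' where \<tau>': "wf_shape n \<tau>'" "shape_len (window_body C') < shape_len \<tau>'"
      "shape_take n \<tau>' (shape_len (window_body C')) = window_body C'"
      "window_eqv t D (window_with_body C' \<tau>')"
      using window_eqv_extend_right[OF wf eqv t \<tau>] unfolding D by blast
    have "window_rel n r C' (window_with_body C' \<tau>')"
      using \<tau>'(1-3) unfolding Dia_Bbar window_rel.simps by blast
    with \<tau> \<tau>' wf window_with_body_extend(1) show thesis by (intro that bisim) (auto simp: D)
  next
    case Dia_Ebar
    with r obtain j where j: "1 \<le> j" "j \<le> window_start C" and D: "D = window_extend_left C j" by auto
    obtain xa xb k R m where C: "C = (xa, xb, k, R, m)" by (rule window_cases)
    obtain xa' xb' k' R' m' where C': "C' = (xa', xb', k', R', m')" by (rule window_cases)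
    obtain j' where j': "1 \<le> j'" "j' \<le> xa' + xb'" "window_eqv t D (window_extend_left C' j')"
      using window_eqv_extend_left[OF eqv[unfolded C C'] t(1,2)] j unfolding C C' D by auto
    with j wf Dia_Ebar show thesis
      by (intro that[of "window_extend_left C' j'"] bisim) (auto simp: C C' D window_extend_left_simps)
  qed
qed

lemma graded_bisim_window_bisim: "graded_bisim (window_frame n) (window_frame n) (window_bisim n)"
proof (rule graded_bisim_symI)
  fix d C C'
  assume "window_bisim n d C C'"
  then show "window_bisim n d C' C" by (simp add: window_bisim_def window_eqv_sym)
next
  fix d C C' p
  assume "window_bisim n d C C'"
  then have "min (2 ^ Suc d) (fst (window_body C)) = min (2 ^ Suc d) (fst (window_body C'))"
    unfolding window_bisim_def by (cases C rule: window_cases; cases C' rule: window_cases) simp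
  then have "fst (window_body C) = 0 \<longleftrightarrow> fst (window_body C') = 0" by (rule min_eq_zero_iff[rotated]) simp
  then show "hs_val (window_frame n) p C \<longleftrightarrow> hs_val (window_frame n) p C'"
    by (simp add: window_frame_def)
next
  fix d C C'
  assume "window_bisim n (Suc d) C C'"
  moreover have "(2::nat) ^ Suc d \<le> 2 ^ Suc (Suc d)" by simp
  ultimately show "window_bisim n d C C'"
    unfolding window_bisim_def by (meson order.trans window_eqv_mono)
next
  fix d r C C' D
  assume Z: "window_bisim n (Suc d) C C'" and r: "hs_rel (window_frame n) r C D"
  from r have "window_rel n r C D" by (simp add: window_frame_def)
  with Z obtain D' where "window_rel n r C' D'" "window_bisim n d D D'" by (rule window_bisim_forward)
  then show "\<exists>D'. hs_rel (window_frame n) r C' D' \<and> window_bisim n d D D'"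
    by (intro exI[of _ D']) (simp add: window_frame_def)
qed

lemma ct_models_ladder_change_start:
  fixes \<phi> :: "'ap hs"
  assumes n: "n = 2 * 2 ^ Suc (hs_depth \<phi>)" and s: "s \<le> 1" "s' \<le> 1"
    and "ct_models (ladder n s :: (nat, 'ap) kripke) \<phi>"
  shows "ct_models (ladder n s' :: (nat, 'ap) kripke) \<phi>"
  unfolding ct_models_ladder_iff
proof (intro allI impI)
  fix \<sigma>' assume \<sigma>': "wf_shape n \<sigma>' \<and> hd (shape_trace n \<sigma>') = s'"
  have T: "1 \<le> (2::nat) ^ Suc (hs_depth \<phi>)" "2 * 2 ^ Suc (hs_depth \<phi>) \<le> n" using n by simp_all
  obtain \<sigma> where \<sigma>: "wf_shape n \<sigma>" "hd (shape_trace n \<sigma>) = s"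
    and eqv: "shape_eqv (2 ^ Suc (hs_depth \<phi>)) \<sigma>' \<sigma>"
    using shape_change_start[OF T s(2,1)] \<sigma>' by blast
  with assms(4) have "hs_sat (window_frame n) (0, 0, \<sigma>) \<phi>" unfolding ct_models_ladder_iff by blast
  moreover have "window_bisim n (hs_depth \<phi>) (0, 0, \<sigma>') (0, 0, \<sigma>)"
    using \<sigma> \<sigma>' eqv n unfolding window_bisim_def by simp
  ultimately show "hs_sat (window_frame n) (0, 0, \<sigma>') \<phi>"
    using graded_bisim_hs_sat[OF graded_bisim_window_bisim order.refl] by blast
qed

section \<open>The separating formula\<close>

lemma lin_models_ladder_0: "\<not> lin_models (ladder n 0 :: (nat, 'ap) kripke) (DiaBbar (DiaE (Prop p)))"
proof -
  have "is_path (ladder n 0 :: (nat, 'ap) kripke) (\<lambda>_. 0)" by (simp add: is_path_def)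
  moreover have "\<not> lin_holds (ladder n 0 :: (nat, 'ap) kripke) (\<lambda>_. 0) 0 0 (DiaBbar (DiaE (Prop p)))"
    by auto
  moreover have "(\<lambda>_. 0::nat) 0 = init (ladder n 0 :: (nat, 'ap) kripke)" by simp
  ultimately show ?thesis unfolding lin_models_def by blast
qed

lemma path_ladder_1:
  assumes "is_path (ladder n 1 :: (nat, 'ap) kripke) \<pi>" "\<pi> 0 = 1"
  shows "\<pi> i = min (Suc i) (Suc n)"
proof (induction i)
  case (Suc i)
  have "(\<pi> i, \<pi> (Suc i)) \<in> trans (ladder n 1 :: (nat, 'ap) kripke)"
    using assms(1) unfolding is_path_def by blast
  with Suc show ?case by (cases "i < n") auto
qed (use assms(2) in simp)

lemma lin_models_ladder_1: "lin_models (ladder n 1 :: (nat, 'ap) kripke) (DiaBbar (DiaE (Prop p)))"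
  unfolding lin_models_def
proof (intro allI impI)
  fix \<pi> i
  assume "is_path (ladder n 1 :: (nat, 'ap) kripke) \<pi> \<and> \<pi> 0 = init (ladder n 1 :: (nat, 'ap) kripke)"
  then have "is_path (ladder n 1 :: (nat, 'ap) kripke) \<pi>" "\<pi> 0 = 1" by simp_all
  then have \<pi>: "\<pi> j = min (Suc j) (Suc n)" for j by (rule path_ladder_1)
  have "lin_holds (ladder n 1 :: (nat, 'ap) kripke) \<pi> 0 (i + n + 1) (DiaE (Prop p))"
    using \<pi> by (auto intro!: exI[of _ "i + n + 1"])
  then show "lin_holds (ladder n 1 :: (nat, 'ap) kripke) \<pi> 0 i (DiaBbar (DiaE (Prop p)))"
    by (auto intro!: exI[of _ "i + n + 1"])
qed

lemma no_lin_equivalent_if_ladder_start_invisible: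
  fixes sem :: "(nat, 'ap) kripke \<Rightarrow> 'ap hs \<Rightarrow> bool"
  assumes "\<And>\<phi> n. n = 2 * 2 ^ Suc (hs_depth \<phi>) \<Longrightarrow> sem (ladder n 0) \<phi> \<longleftrightarrow> sem (ladder n 1) \<phi>"
  shows "\<not> (\<exists>\<phi>. \<forall>K :: (nat, 'ap) kripke.
    kripke K \<and> finite (states K) \<longrightarrow> (sem K \<phi> \<longleftrightarrow> lin_models K (DiaBbar (DiaE (Prop p)))))"
proof
  assume "\<exists>\<phi>. \<forall>K :: (nat, 'ap) kripke.
    kripke K \<and> finite (states K) \<longrightarrow> (sem K \<phi> \<longleftrightarrow> lin_models K (DiaBbar (DiaE (Prop p))))"
  then obtain \<phi> where \<phi>: "\<And>K :: (nat, 'ap) kripke.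
    kripke K \<Longrightarrow> finite (states K) \<Longrightarrow> sem K \<phi> \<longleftrightarrow> lin_models K (DiaBbar (DiaE (Prop p)))" by blast
  define n :: nat where "n = 2 * 2 ^ Suc (hs_depth \<phi>)"
  have "\<not> sem (ladder n 0) \<phi>"
    using \<phi>[of "ladder n 0"] kripke_ladder[of 0 n] lin_models_ladder_0[of n p] by simp
  moreover have "sem (ladder n 1) \<phi>"
    using \<phi>[of "ladder n 1"] kripke_ladder[of 1 n] lin_models_ladder_1[of n p] by simp
  ultimately show False using assms n_def by blast
qed

theorem proposition5p11:
  shows "(\<exists>\<psi> :: ('ap::finite) hs. \<not> (\<exists>\<phi>. \<forall>K :: (nat, 'ap) kripke.
            kripke K \<and> finite (states K) \<longrightarrow> (st_models K \<phi> \<longleftrightarrow> lin_models K \<psi>)))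
       \<and> (\<exists>\<psi>' :: 'ap hs. \<not> (\<exists>\<phi>. \<forall>K :: (nat, 'ap) kripke.
            kripke K \<and> finite (states K) \<longrightarrow> (ct_models K \<phi> \<longleftrightarrow> lin_models K \<psi>')))"
proof -
  fix p :: 'ap
  have "st_models (ladder n 0 :: (nat, 'ap) kripke) \<phi> \<longleftrightarrow> st_models (ladder n 1 :: (nat, 'ap) kripke) \<phi>"
    and "ct_models (ladder n 0 :: (nat, 'ap) kripke) \<phi> \<longleftrightarrow> ct_models (ladder n 1 :: (nat, 'ap) kripke) \<phi>"
    if "n = 2 * 2 ^ Suc (hs_depth \<phi>)" for n :: nat and \<phi> :: "'ap hs"
    using st_models_ladder_change_start[OF that, of 0 1] st_models_ladder_change_start[OF that, of 1 0]
      ct_models_ladder_change_start[OF that, of 0 1] ct_models_ladder_change_start[OF that, of 1 0]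
    by blast+
  then show ?thesis
    using no_lin_equivalent_if_ladder_start_invisible[of st_models p]
      no_lin_equivalent_if_ladder_start_invisible[of ct_models p] by blast
qed

end
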